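(* For every interval forecast $I\subseteq(0,1)$ with rational endpoints, there is a lower semicomputable test supermartingale $T$ for $I$ such that $\limsup_{n\to\infty}T(\omega_{1:n})=\infty$ for every path $\omega\in\Omega$ that is not wML-random for $I$.
   Context: $\mathcal X=\{0,1\}$, $\Omega=\mathcal X^{\mathbb N}$ (paths), $\mathbb S=\bigcup_{n\ge0}\mathcal X^n$ (finite binary strings), $\square$ the empty string, $\omega_{1:n}=(\omega_1,\dots,\omega_n)$. Interval forecasts are nonempty closed intervals $I\subseteq[0,1]$; $\overline E_I(f)=\max_{p\in I}[pf(1)+(1-p)f(0)]$. A test supermartingale for $I$ is $T:\mathbb S\to\mathbb R_{\ge0}$ with $T(\square)=1$ and $\overline E_I(T(s\,\cdot)-T(s))\le0$ for all $s$; lower semicomputable if there is a recursive $r:\mathbb S\times\mathbb N_0\to\mathbb Q$ non-decreasing in $n$ with $T(s)=\lim_nr(s,n)$. A multiplier process $D$ maps $\mathbb S$ to gambles $\mathcal X\to\mathbb R$, is lower semicomputable if $(s,x)\mapsto D(s)(x)$ is a limit of a recursive non-decreasing rational approximation, and generates $D^{\circledcirc}(x_1,\dots,x_n)=\prod_{k=0}^{n-1}D(x_{1:k})(x_{k+1})$. A path $\omega$ is wML-random for $I$ if no test supermartingale for $I$ of the form $D^{\circledcirc}$ with $D$ a lower semicomputable multiplier process satisfies $\limsup_nD^{\circledcirc}(\omega_{1:n})=\infty$. *)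

theory Defs
  imports Complex_Main "HOL-Library.Nat_Bijection" "HOL-Library.Liminf_Limsup"
    "HOL-Library.Extended_Real"
begin

datatype recf =
    Zf
  | Sf
  | Idf nat
  | Cnf recf "recf list"
  | Prf recf recf
  | Mnf recf

inductive reval :: "recf \<Rightarrow> nat list \<Rightarrow> nat \<Rightarrow> bool" where
  reval_Z: "reval Zf xs 0"
| reval_S: "reval Sf (x # xs) (Suc x)"
| reval_Id: "i < length xs \<Longrightarrow> reval (Idf i) xs (xs ! i)"
| reval_Cn: "list_all2 (\<lambda>g y. reval g xs y) gs ys \<Longrightarrow> reval f ys z \<Longrightarrow> reval (Cnf f gs) xs z"
| reval_Pr0: "reval f xs z \<Longrightarrow> reval (Prf f g) (0 # xs) z"
| reval_PrS: "reval (Prf f g) (n # xs) y \<Longrightarrow> reval g (n # y # xs) z \<Longrightarrow>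
              reval (Prf f g) (Suc n # xs) z"
| reval_Mn: "reval f (n # xs) 0 \<Longrightarrow> (\<forall>m<n. \<exists>y. reval f (m # xs) (Suc y)) \<Longrightarrow>
              reval (Mnf f) xs n"

text \<open>Finite binary strings are bool lists (False = 0, True = 1).\<close>

fun enc_str :: "bool list \<Rightarrow> nat" where
  "enc_str [] = 0"
| "enc_str (b # s) = 2 * enc_str s + (if b then 2 else 1)"

definition enc_int :: "int \<Rightarrow> nat" where
  "enc_int z = (if z \<ge> 0 then 2 * nat z else 2 * nat (- z) - 1)"

definition enc_rat :: "rat \<Rightarrow> nat" where
  "enc_rat q = (case quotient_of q of (p, d) \<Rightarrow> prod_encode (enc_int p, nat d))"

definition enc_bit :: "bool \<Rightarrow> nat" where
  "enc_bit x = (if x then 1 else 0)"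

definition recursive_SN_Q :: "(bool list \<Rightarrow> nat \<Rightarrow> rat) \<Rightarrow> bool" where
  "recursive_SN_Q r \<longleftrightarrow> (\<exists>f. \<forall>s n. reval f [enc_str s, n] (enc_rat (r s n)))"

definition recursive_SXN_Q :: "(bool list \<Rightarrow> bool \<Rightarrow> nat \<Rightarrow> rat) \<Rightarrow> bool" where
  "recursive_SXN_Q r \<longleftrightarrow>
     (\<exists>f. \<forall>s x n. reval f [enc_str s, enc_bit x, n] (enc_rat (r s x n)))"

definition upper_exp :: "real set \<Rightarrow> (bool \<Rightarrow> real) \<Rightarrow> real" where
  "upper_exp I f = (SUP p\<in>I. p * f True + (1 - p) * f False)"

definition test_supermartingale :: "real set \<Rightarrow> (bool list \<Rightarrow> real) \<Rightarrow> bool" where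
  "test_supermartingale I T \<longleftrightarrow>
     T [] = 1 \<and> (\<forall>s. T s \<ge> 0) \<and> (\<forall>s. upper_exp I (\<lambda>x. T (s @ [x]) - T s) \<le> 0)"

definition lower_semicomputable :: "(bool list \<Rightarrow> real) \<Rightarrow> bool" where
  "lower_semicomputable T \<longleftrightarrow>
     (\<exists>r. recursive_SN_Q r \<and> (\<forall>s. mono (r s)) \<and>
          (\<forall>s. (\<lambda>n. real_of_rat (r s n)) \<longlonglongrightarrow> T s))"

definition lower_semicomputable_mult :: "(bool list \<Rightarrow> bool \<Rightarrow> real) \<Rightarrow> bool" where
  "lower_semicomputable_mult D \<longleftrightarrow>
     (\<exists>r. recursive_SXN_Q r \<and> (\<forall>s x. mono (r s x)) \<and>
          (\<forall>s x. (\<lambda>n. real_of_rat (r s x n)) \<longlonglongrightarrow> D s x))"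

definition mult_gen :: "(bool list \<Rightarrow> bool \<Rightarrow> real) \<Rightarrow> bool list \<Rightarrow> real" where
  "mult_gen D xs = (\<Prod>k<length xs. D (take k xs) (xs ! k))"

text \<open>Prefix \<open>\<omega>_{1:n}\<close> of a path (paths are indexed from 0).\<close>
definition prefix :: "(nat \<Rightarrow> bool) \<Rightarrow> nat \<Rightarrow> bool list" where
  "prefix \<omega> n = map \<omega> [0..<n]"

definition wML_random :: "real set \<Rightarrow> (nat \<Rightarrow> bool) \<Rightarrow> bool" where
  "wML_random I \<omega> \<longleftrightarrow>
     \<not> (\<exists>D. lower_semicomputable_mult D \<and> test_supermartingale I (mult_gen D) \<and>
            limsup (\<lambda>n. ereal (mult_gen D (prefix \<omega> n))) = \<infinity>)"

end

theory Submission
  imports Defs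
begin

text \<open>
  Every program \<open>k\<close> is read as a rational approximation \<open>r\<^sub>k(s, x, m)\<close> of a multiplier process.
  At stage \<open>n\<close> it is trimmed to the longest initial run \<open>m = 0, 1, \<dots>\<close> of approximations that
  have been computed within \<open>n\<close> steps, are non-decreasing in \<open>m\<close> and satisfy the supermartingale
  inequality \<open>p D(s)(1) + (1 - p) D(s)(0) \<le> 1\<close> at both endpoints of \<open>I\<close>; since this inequality is
  affine in \<open>p\<close>, it then holds on all of \<open>I\<close>. The trimmed values increase in \<open>n\<close>, so their limits
  \<open>D\<^sub>k\<close> are lower semicomputable multipliers generating test supermartingales, and \<open>D\<^sub>k(s) = D(s)\<close>
  whenever \<open>k\<close> computes the approximation of a multiplier process \<open>D\<close> and \<open>D\<^sup>\<circledcirc>(s) > 0\<close>.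
  The mixture \<open>T = \<Sum>\<^sub>k 2^(-k-1) D\<^sub>k\<^sup>\<circledcirc>\<close> is then a lower semicomputable test supermartingale,
  and along any path on which some \<open>D\<^sup>\<circledcirc>\<close> is unbounded, \<open>D\<^sup>\<circledcirc>\<close> stays positive, so \<open>T\<close>
  dominates \<open>2^(-k-1) D\<^sup>\<circledcirc>\<close> there for a program \<open>k\<close> computing \<open>D\<close>.

  The trimming is computable because the \<open>\<mu>\<close>-recursive programs admit a universal evaluator with
  bounded running time: a program halts within \<open>n\<close> steps if some number \<open>t \<le> n\<close> codes a valid
  derivation trace of its computation.
\<close>

section \<open>Primitive recursive closure of \<open>reval\<close>\<close>

definition computable :: "nat \<Rightarrow> (nat list \<Rightarrow> nat) \<Rightarrow> bool" where
  "computable k F \<longleftrightarrow> (\<exists>f. \<forall>xs. length xs = k \<longrightarrow> reval f xs (F xs))"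

definition decidable :: "nat \<Rightarrow> (nat list \<Rightarrow> bool) \<Rightarrow> bool" where
  "decidable k P \<longleftrightarrow> computable k (\<lambda>xs. if P xs then 1 else 0)"

named_theorems computable_intros

lemma computable_cong:
  "computable k F \<Longrightarrow> (\<And>xs. length xs = k \<Longrightarrow> F xs = G xs) \<Longrightarrow> computable k G"
  unfolding computable_def by metis

fun const_prog :: "nat \<Rightarrow> recf" where
  "const_prog 0 = Zf"
| "const_prog (Suc c) = Cnf Sf [const_prog c]"

lemma reval_const_prog: "reval (const_prog c) xs c"
proof (induction c)
  case 0
  show ?case by (simp add: reval_Z)
next
  case (Suc c)
  have "list_all2 (\<lambda>g y. reval g xs y) [const_prog c] [c]" using Suc by simp
  moreover have "reval Sf [c] (Suc c)" using reval_S[of c "[]"] by simp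
  ultimately show ?case using reval_Cn[of xs "[const_prog c]" "[c]" Sf "Suc c"] by simp
qed

lemma computable_const [computable_intros]: "computable k (\<lambda>_. c)"
  unfolding computable_def using reval_const_prog by blast

lemma computable_nth [computable_intros]: "j < k \<Longrightarrow> computable k (\<lambda>xs. xs ! j)"
  unfolding computable_def using reval_Id by metis

lemma computable_nth_drop [computable_intros]:
  "n + j < k \<Longrightarrow> computable k (\<lambda>xs. drop n xs ! j)"
  by (rule computable_cong[OF computable_nth[of "n + j" k]]) auto

lemma computable_nth_drop_drop [computable_intros]:
  "n + m + j < k \<Longrightarrow> computable k (\<lambda>xs. drop n (drop m xs) ! j)"
  "n + m + l + j < k \<Longrightarrow> computable k (\<lambda>xs. drop n (drop m (drop l xs)) ! j)"
  by (rule computable_cong[OF computable_nth[of "n + m + j" k]]; simp add: add_ac)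
    (rule computable_cong[OF computable_nth[of "n + m + l + j" k]]; simp add: add_ac)

lemma computable_Suc [computable_intros]: "computable k A \<Longrightarrow> computable k (\<lambda>xs. Suc (A xs))"
  unfolding computable_def
proof (elim exE, intro exI allI impI)
  fix a and xs :: "nat list" assume "\<forall>xs. length xs = k \<longrightarrow> reval a xs (A xs)" "length xs = k"
  then have "list_all2 (\<lambda>g y. reval g xs y) [a] [A xs]" by simp
  then show "reval (Cnf Sf [a]) xs (Suc (A xs))" using reval_S[of "A xs" "[]"] by (auto intro: reval_Cn)
qed

lemma list_all2_programs:
  assumes "\<forall>G\<in>set Gs. computable k G"
  shows "\<exists>gs. list_all2 (\<lambda>g G. \<forall>xs. length xs = k \<longrightarrow> reval g xs (G xs)) gs Gs"
  using assms
proof (induction Gs)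
  case Nil
  show ?case by auto
next
  case (Cons G Gs)
  then obtain gs where "list_all2 (\<lambda>g G. \<forall>xs. length xs = k \<longrightarrow> reval g xs (G xs)) gs Gs"
    by auto
  moreover obtain g where "\<forall>xs. length xs = k \<longrightarrow> reval g xs (G xs)"
    using Cons.prems unfolding computable_def by auto
  ultimately show ?case by (intro exI[of _ "g # gs"]) auto
qed

lemma computable_comp:
  assumes "computable m F" "length Gs = m" "\<forall>G\<in>set Gs. computable k G"
  shows "computable k (\<lambda>xs. F (map (\<lambda>G. G xs) Gs))"
proof -
  obtain f where f: "\<forall>xs. length xs = m \<longrightarrow> reval f xs (F xs)"
    using assms(1) unfolding computable_def by auto
  obtain gs where gs: "list_all2 (\<lambda>g G. \<forall>xs. length xs = k \<longrightarrow> reval g xs (G xs)) gs Gs"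
    using list_all2_programs[OF assms(3)] by auto
  have "reval (Cnf f gs) xs (F (map (\<lambda>G. G xs) Gs))" if "length xs = k" for xs
  proof (rule reval_Cn)
    show "list_all2 (\<lambda>g y. reval g xs y) gs (map (\<lambda>G. G xs) Gs)"
      using gs that by (auto simp: list_all2_conv_all_nth)
    show "reval f (map (\<lambda>G. G xs) Gs) (F (map (\<lambda>G. G xs) Gs))" using f assms(2) by simp
  qed
  then show ?thesis unfolding computable_def by blast
qed

lemma computable_Prf:
  assumes "computable k B" "computable (Suc (Suc k)) G"
  shows "computable (Suc k) (\<lambda>xs. rec_nat (B (tl xs)) (\<lambda>i acc. G (i # acc # tl xs)) (hd xs))"
proof -
  obtain b where b: "\<forall>xs. length xs = k \<longrightarrow> reval b xs (B xs)"
    using assms(1) unfolding computable_def by auto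
  obtain g where g: "\<forall>xs. length xs = Suc (Suc k) \<longrightarrow> reval g xs (G xs)"
    using assms(2) unfolding computable_def by auto
  have *: "reval (Prf b g) (n # xs) (rec_nat (B xs) (\<lambda>i acc. G (i # acc # xs)) n)"
    if "length xs = k" for n xs
  proof (induction n)
    case 0
    show ?case using b that by (simp add: reval_Pr0)
  next
    case (Suc n)
    then show ?case using g that by (auto intro: reval_PrS)
  qed
  show ?thesis unfolding computable_def
  proof (intro exI allI impI)
    fix xs :: "nat list" assume "length xs = Suc k"
    then obtain n ys where "xs = n # ys" "length ys = k" by (cases xs) auto
    then show "reval (Prf b g) xs (rec_nat (B (tl xs)) (\<lambda>i acc. G (i # acc # tl xs)) (hd xs))"
      using * by simp
  qed
qed

lemma computable_rec_nat [computable_intros]: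
  assumes "computable k N" "computable k B"
    "computable (Suc (Suc k)) (\<lambda>ys. G (ys ! 0) (ys ! 1) (drop 2 ys))"
  shows "computable k (\<lambda>xs. rec_nat (B xs) (\<lambda>i acc. G i acc xs) (N xs))"
proof -
  define G' where "G' = (\<lambda>ys. G (ys ! 0) (ys ! 1) (drop 2 ys))"
  let ?R = "\<lambda>xs. rec_nat (B (tl xs)) (\<lambda>i acc. G' (i # acc # tl xs)) (hd xs)"
  have "computable (Suc k) ?R"
    by (rule computable_Prf[OF assms(2)]) (use assms(3) in \<open>simp add: G'_def\<close>)
  then have "computable k (\<lambda>xs. ?R (map (\<lambda>G. G xs) (N # map (\<lambda>j xs. xs ! j) [0..<k])))"
    by (rule computable_comp) (auto simp: assms(1) computable_nth)
  then show ?thesis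
  proof (rule computable_cong)
    fix xs :: "nat list" assume "length xs = k"
    then have "map (\<lambda>j. xs ! j) [0..<k] = xs" using map_nth[of xs] by simp
    then show "?R (map (\<lambda>G. G xs) (N # map (\<lambda>j xs. xs ! j) [0..<k]))
        = rec_nat (B xs) (\<lambda>i acc. G i acc xs) (N xs)"
      by (simp add: comp_def G'_def)
  qed
qed

lemma computable_drop:
  assumes "computable k A"
  shows "computable (m + k) (\<lambda>ys. A (drop m ys))"
proof -
  have "computable (m + k) (\<lambda>zs. A (map (\<lambda>G. G zs) (map (\<lambda>j zs. zs ! (j + m)) [0..<k])))"
    by (rule computable_comp[OF assms]) (auto intro: computable_nth)
  then show ?thesis
  proof (rule computable_cong)
    fix zs :: "nat list" assume "length zs = m + k"
    then have "map (\<lambda>j. zs ! (j + m)) [0..<k] = drop m zs"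
      by (intro nth_equalityI) (auto simp: add.commute)
    then show "A (map (\<lambda>G. G zs) (map (\<lambda>j zs. zs ! (j + m)) [0..<k])) = A (drop m zs)"
      by (simp add: comp_def)
  qed
qed

lemma computable_drop1: "computable k A \<Longrightarrow> computable (Suc k) (\<lambda>ys. A (drop 1 ys))"
  using computable_drop[of k A 1] by simp

lemma computable_drop2: "computable k A \<Longrightarrow> computable (Suc (Suc k)) (\<lambda>ys. A (drop 2 ys))"
  using computable_drop[of k A 2] by simp

lemma computable_skip_second:
  assumes "computable (Suc k) (\<lambda>ys. F (ys ! 0) (drop 1 ys))"
  shows "computable (Suc (Suc k)) (\<lambda>zs. F (zs ! 0) (drop 2 zs))"
proof -
  let ?args = "(\<lambda>zs. zs ! 0) # map (\<lambda>j zs. zs ! (j + 2)) [0..<k]"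
  have "computable (Suc (Suc k)) (\<lambda>zs. F (map (\<lambda>G. G zs) ?args ! 0) (drop 1 (map (\<lambda>G. G zs) ?args)))"
    by (rule computable_comp[OF assms]) (auto intro: computable_nth)
  then show ?thesis
  proof (rule computable_cong)
    fix zs :: "nat list" assume "length zs = Suc (Suc k)"
    then have "map (\<lambda>j. zs ! (j + 2)) [0..<k] = drop 2 zs"
      by (intro nth_equalityI) auto
    then show "F (map (\<lambda>G. G zs) ?args ! 0) (drop 1 (map (\<lambda>G. G zs) ?args)) = F (zs ! 0) (drop 2 zs)"
      by (simp add: comp_def)
  qed
qed

lemma computable_add [computable_intros]:
  assumes "computable k A" "computable k B"
  shows "computable k (\<lambda>xs. A xs + B xs)"
proof -
  have "computable k (\<lambda>xs. rec_nat (A xs) (\<lambda>i acc. Suc acc) (B xs))"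
    by (rule computable_rec_nat; intro computable_intros assms) simp_all
  moreover have "rec_nat a (\<lambda>i acc. Suc acc) b = a + b" for a b :: nat by (induction b) auto
  ultimately show ?thesis by simp
qed

lemma computable_mult [computable_intros]:
  assumes "computable k A" "computable k B"
  shows "computable k (\<lambda>xs. A xs * B xs)"
proof -
  have "computable k (\<lambda>xs. rec_nat 0 (\<lambda>i acc. acc + A xs) (B xs))"
    by (rule computable_rec_nat; intro computable_intros assms computable_drop2[OF assms(1)]) simp_all
  moreover have "rec_nat 0 (\<lambda>i acc. acc + a) b = a * b" for a b :: nat by (induction b) auto
  ultimately show ?thesis by (simp add: mult.commute)
qed

lemma computable_pred: "computable k A \<Longrightarrow> computable k (\<lambda>xs. A xs - 1)"
proof -
  assume "computable k A"
  then have "computable k (\<lambda>xs. rec_nat 0 (\<lambda>i acc. i) (A xs))"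
    by (intro computable_rec_nat computable_intros) simp_all
  moreover have "rec_nat 0 (\<lambda>i acc. i) b = b - 1" for b :: nat by (induction b) auto
  ultimately show ?thesis by simp
qed

lemma computable_diff [computable_intros]:
  assumes "computable k A" "computable k B"
  shows "computable k (\<lambda>xs. A xs - B xs)"
proof -
  have "computable k (\<lambda>xs. rec_nat (A xs) (\<lambda>i acc. acc - 1) (B xs))"
    by (rule computable_rec_nat; intro computable_intros assms computable_pred) simp_all
  moreover have "rec_nat a (\<lambda>i acc. acc - 1) b = a - b" for a b :: nat by (induction b) auto
  ultimately show ?thesis by simp
qed

lemma computable_if [computable_intros]:
  assumes "decidable k P" "computable k A" "computable k B"
  shows "computable k (\<lambda>xs. if P xs then A xs else B xs)"
proof -
  have "computable k (\<lambda>xs. A xs * (if P xs then 1 else 0) + B xs * (1 - (if P xs then 1 else 0)))"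
    using assms unfolding decidable_def by (intro computable_intros)
  then show ?thesis by (rule computable_cong) auto
qed

lemma decidable_const [computable_intros]: "decidable k (\<lambda>_. c)"
  unfolding decidable_def by (rule computable_const)

lemma decidable_le [computable_intros]:
  assumes "computable k A" "computable k B"
  shows "decidable k (\<lambda>xs. A xs \<le> B xs)"
proof -
  have "computable k (\<lambda>xs. 1 - (A xs - B xs))" using assms by (intro computable_intros)
  then show ?thesis unfolding decidable_def by (rule computable_cong) auto
qed

lemma decidable_less [computable_intros]:
  assumes "computable k A" "computable k B"
  shows "decidable k (\<lambda>xs. A xs < B xs)"
proof -
  have "computable k (\<lambda>xs. 1 - (Suc (A xs) - B xs))" using assms by (intro computable_intros)
  then show ?thesis unfolding decidable_def by (rule computable_cong) auto
qed

lemma decidable_eq [computable_intros]: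
  assumes "computable k A" "computable k B"
  shows "decidable k (\<lambda>xs. A xs = B xs)"
proof -
  have "computable k (\<lambda>xs. 1 - ((A xs - B xs) + (B xs - A xs)))" using assms by (intro computable_intros)
  then show ?thesis unfolding decidable_def by (rule computable_cong) auto
qed

lemma decidable_not [computable_intros]: "decidable k P \<Longrightarrow> decidable k (\<lambda>xs. \<not> P xs)"
proof -
  assume "decidable k P"
  then have "computable k (\<lambda>xs. 1 - (if P xs then 1 else 0))" by (intro computable_intros)
  then show ?thesis unfolding decidable_def by (rule computable_cong) auto
qed

lemma decidable_conj [computable_intros]:
  "decidable k P \<Longrightarrow> decidable k Q \<Longrightarrow> decidable k (\<lambda>xs. P xs \<and> Q xs)"
proof -
  assume "decidable k P" "decidable k Q"
  then have "computable k (\<lambda>xs. (if P xs then 1 else 0) * (if Q xs then 1 else 0))"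
    by (intro computable_intros)
  then show ?thesis unfolding decidable_def by (rule computable_cong) auto
qed

lemma decidable_disj [computable_intros]:
  "decidable k P \<Longrightarrow> decidable k Q \<Longrightarrow> decidable k (\<lambda>xs. P xs \<or> Q xs)"
proof -
  assume "decidable k P" "decidable k Q"
  then have "decidable k (\<lambda>xs. \<not> (\<not> P xs \<and> \<not> Q xs))" by (intro computable_intros)
  then show ?thesis by simp
qed

lemma decidable_imp [computable_intros]:
  "decidable k P \<Longrightarrow> decidable k Q \<Longrightarrow> decidable k (\<lambda>xs. P xs \<longrightarrow> Q xs)"
proof -
  assume "decidable k P" "decidable k Q"
  then have "decidable k (\<lambda>xs. \<not> P xs \<or> Q xs)" by (intro computable_intros)
  then show ?thesis by simp
qed

lemma computable_sum [computable_intros]: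
  assumes "computable k N" "computable (Suc k) (\<lambda>ys. F (ys ! 0) (drop 1 ys))"
  shows "computable k (\<lambda>xs. \<Sum>i<N xs. F i xs)"
proof -
  have "computable k (\<lambda>xs. rec_nat 0 (\<lambda>i acc. acc + F i xs) (N xs))"
    by (rule computable_rec_nat; intro computable_intros assms computable_skip_second[OF assms(2)])
      simp_all
  moreover have "rec_nat 0 (\<lambda>i acc. acc + F i xs) n = (\<Sum>i<n. F i xs)" for n xs
    by (induction n) auto
  ultimately show ?thesis by simp
qed

lemma computable_prod [computable_intros]:
  assumes "computable k N" "computable (Suc k) (\<lambda>ys. F (ys ! 0) (drop 1 ys))"
  shows "computable k (\<lambda>xs. \<Prod>i<N xs. F i xs)"
proof -
  have "computable k (\<lambda>xs. rec_nat 1 (\<lambda>i acc. acc * F i xs) (N xs))"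
    by (rule computable_rec_nat; intro computable_intros assms computable_skip_second[OF assms(2)])
      simp_all
  moreover have "rec_nat 1 (\<lambda>i acc. acc * F i xs) n = (\<Prod>i<n. F i xs)" for n xs
    by (induction n) auto
  ultimately show ?thesis by simp
qed

lemma decidable_bex [computable_intros]:
  assumes "computable k N" "decidable (Suc k) (\<lambda>ys. P (ys ! 0) (drop 1 ys))"
  shows "decidable k (\<lambda>xs. \<exists>i<N xs. P i xs)"
proof -
  have "decidable k (\<lambda>xs. 0 < (\<Sum>i<N xs. if P i xs then 1 else (0::nat)))"
    by (intro computable_intros assms)
  moreover have "(0 < (\<Sum>i<n. if P i xs then 1 else (0::nat))) = (\<exists>i<n. P i xs)" for n xs
    by (induction n) (auto simp: less_Suc_eq)
  ultimately show ?thesis by simp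
qed

lemma decidable_ball [computable_intros]:
  assumes "computable k N" "decidable (Suc k) (\<lambda>ys. P (ys ! 0) (drop 1 ys))"
  shows "decidable k (\<lambda>xs. \<forall>i<N xs. P i xs)"
proof -
  have "decidable k (\<lambda>xs. \<not> (\<exists>i<N xs. \<not> P i xs))" by (intro computable_intros assms)
  then show ?thesis by simp
qed

definition bounded_min :: "nat \<Rightarrow> (nat \<Rightarrow> bool) \<Rightarrow> nat" where
  "bounded_min N P = (if \<exists>i<N. P i then LEAST i. P i else N)"

lemma bounded_min_eq_sum: "bounded_min N P = (\<Sum>j<N. if \<exists>i<Suc j. P i then 0 else 1)"
proof (induction N)
  case 0
  show ?case by (simp add: bounded_min_def)
next
  case (Suc N)
  show ?case
  proof (cases "\<exists>i<N. P i")
    case True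
    then show ?thesis using Suc by (auto simp: bounded_min_def less_Suc_eq)
  next
    case none: False
    have "(\<Sum>j<N. if \<exists>i<Suc j. P i then 0 else 1) = (\<Sum>j<N. (1::nat))"
      by (rule sum.cong) (use none in \<open>auto simp: less_Suc_eq_le\<close>)
    then have N: "(\<Sum>j<N. if \<exists>i<Suc j. P i then 0 else 1) = N" by simp
    show ?thesis
    proof (cases "P N")
      case True
      then have "(LEAST i. P i) = N" using none by (intro Least_equality) (auto simp: not_less)
      then show ?thesis using True none N by (auto simp: bounded_min_def less_Suc_eq)
    next
      case False
      then show ?thesis using none N by (auto simp: bounded_min_def less_Suc_eq)
    qed
  qed
qed

lemma computable_bounded_min [computable_intros]:
  assumes "computable k N" "decidable (Suc k) (\<lambda>ys. P (ys ! 0) (drop 1 ys))"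
  shows "computable k (\<lambda>xs. bounded_min (N xs) (\<lambda>i. P i xs))"
proof -
  have "decidable (Suc (Suc k)) (\<lambda>zs. P (zs ! 0) (drop 1 (drop 1 zs)))"
    using computable_skip_second[OF assms(2)[unfolded decidable_def]]
    unfolding decidable_def by (simp add: numeral_2_eq_2)
  then have "computable k (\<lambda>xs. \<Sum>j<N xs. if \<exists>i<Suc j. P i xs then 0 else 1)"
    by (intro computable_intros assms) simp_all
  then show ?thesis by (simp add: bounded_min_eq_sum)
qed

lemma bounded_min_prop: "\<exists>i<N. P i \<Longrightarrow> P (bounded_min N P) \<and> bounded_min N P < N"
  by (auto simp: bounded_min_def intro: LeastI order.strict_trans1[OF Least_le])

lemma bounded_min_eqI: "\<lbrakk>i < N; P i; \<And>j. j < i \<Longrightarrow> \<not> P j\<rbrakk> \<Longrightarrow> bounded_min N P = i"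
  by (auto simp: bounded_min_def intro!: Least_equality) (meson not_less)

lemma div_eq_bounded_min: "0 < d \<Longrightarrow> a div d = bounded_min (Suc a) (\<lambda>q. a < Suc q * d)"
proof (rule sym, rule bounded_min_eqI)
  assume d: "0 < d"
  show "a div d < Suc a" by (simp add: le_imp_less_Suc)
  show "a < Suc (a div d) * d"
    using d by (metis add.commute div_mult_mod_eq mod_less_divisor mult.commute mult_Suc_right
        nat_add_left_cancel_less)
  show "\<not> a < Suc j * d" if "j < a div d" for j
  proof -
    have "Suc j * d \<le> (a div d) * d" using that by (intro mult_right_mono) auto
    also have "\<dots> \<le> a" by (metis div_mult_mod_eq le_add1)
    finally show ?thesis by simp
  qed
qed

lemma computable_div [computable_intros]:
  assumes "computable k A" "computable k B"
  shows "computable k (\<lambda>xs. A xs div B xs)"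
proof -
  have "computable k (\<lambda>xs. if B xs = 0 then 0 else bounded_min (Suc (A xs)) (\<lambda>q. A xs < Suc q * B xs))"
    by (intro computable_intros assms computable_drop1[OF assms(1)] computable_drop1[OF assms(2)])
      simp_all
  then show ?thesis by (rule computable_cong) (auto simp: div_eq_bounded_min)
qed

lemma computable_mod [computable_intros]:
  assumes "computable k A" "computable k B"
  shows "computable k (\<lambda>xs. A xs mod B xs)"
proof -
  have "computable k (\<lambda>xs. A xs - B xs * (A xs div B xs))" by (intro computable_intros assms)
  then show ?thesis by (rule computable_cong) (simp add: minus_mult_div_eq_mod)
qed

lemma computable_power [computable_intros]:
  assumes "computable k A" "computable k B"
  shows "computable k (\<lambda>xs. A xs ^ B xs)"
proof -
  have "computable k (\<lambda>xs. rec_nat 1 (\<lambda>i acc. acc * A xs) (B xs))"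
    by (rule computable_rec_nat; intro computable_intros assms computable_drop2[OF assms(1)]) simp_all
  moreover have "rec_nat 1 (\<lambda>i acc. acc * a) b = a ^ b" for a b :: nat by (induction b) auto
  ultimately show ?thesis by simp
qed

lemma decidable_dvd [computable_intros]:
  assumes "computable k A" "computable k B"
  shows "decidable k (\<lambda>xs. A xs dvd B xs)"
proof -
  have "decidable k (\<lambda>xs. B xs mod A xs = 0)" by (intro computable_intros assms)
  then show ?thesis by (simp add: dvd_eq_mod_eq_0)
qed

lemma decidable_even [computable_intros]: "computable k A \<Longrightarrow> decidable k (\<lambda>xs. even (A xs))"
  by (intro computable_intros)

lemma computable_gcd [computable_intros]:
  assumes "computable k A" "computable k B"
  shows "computable k (\<lambda>xs. gcd (A xs) (B xs))"
proof -
  have gcd_eq: "gcd a b = b - bounded_min b (\<lambda>j. (b - j) dvd a \<and> (b - j) dvd b)"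
    if "0 < b" for a b :: nat
  proof -
    have g: "1 \<le> gcd a b" "gcd a b \<le> b" using that by (simp_all add: Suc_le_eq dvd_imp_le)
    have "bounded_min b (\<lambda>j. (b - j) dvd a \<and> (b - j) dvd b) = b - gcd a b"
    proof (rule bounded_min_eqI)
      fix j assume j: "j < b - gcd a b"
      show "\<not> ((b - j) dvd a \<and> (b - j) dvd b)"
      proof
        assume "(b - j) dvd a \<and> (b - j) dvd b"
        then have "b - j \<le> gcd a b" using g by (intro dvd_imp_le) auto
        then show False using j by simp
      qed
    qed (use g that in auto)
    then show ?thesis using g by simp
  qed
  have "computable k (\<lambda>xs. if B xs = 0 then A xs
      else B xs - bounded_min (B xs) (\<lambda>j. (B xs - j) dvd A xs \<and> (B xs - j) dvd B xs))"
    by (intro computable_intros assms computable_drop1[OF assms(1)] computable_drop1[OF assms(2)])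
      simp_all
  then show ?thesis by (rule computable_cong) (auto simp: gcd_eq)
qed

section \<open>Pairs and lists coded as numbers\<close>

definition npair :: "nat \<Rightarrow> nat \<Rightarrow> nat" where "npair a b = prod_encode (a, b)"
definition nfst :: "nat \<Rightarrow> nat" where "nfst c = fst (prod_decode c)"
definition nsnd :: "nat \<Rightarrow> nat" where "nsnd c = snd (prod_decode c)"

lemma nfst_npair [simp]: "nfst (npair a b) = a"
  and nsnd_npair [simp]: "nsnd (npair a b) = b"
  by (simp_all add: nfst_def nsnd_def npair_def)

lemma nfst_0 [simp]: "nfst 0 = 0" and nsnd_0 [simp]: "nsnd 0 = 0"
  by (simp_all add: nfst_def nsnd_def prod_decode_def prod_decode_aux.simps)

lemma npair_nfst_nsnd [simp]: "npair (nfst c) (nsnd c) = c"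
  by (simp add: nfst_def nsnd_def npair_def)

lemma computable_npair [computable_intros]:
  assumes "computable k A" "computable k B"
  shows "computable k (\<lambda>xs. npair (A xs) (B xs))"
proof -
  have "computable k (\<lambda>xs. (A xs + B xs) * Suc (A xs + B xs) div 2 + A xs)"
    by (intro computable_intros assms)
  then show ?thesis by (rule computable_cong) (simp add: npair_def prod_encode_def triangle_def)
qed

lemma nfst_eq_bounded_min: "nfst c = bounded_min (Suc c) (\<lambda>a. \<exists>b<Suc c. npair a b = c)"
proof (rule sym, rule bounded_min_eqI)
  have c: "npair (nfst c) (nsnd c) = c" by simp
  show "nfst c < Suc c" using le_prod_encode_1[of "nfst c" "nsnd c"] c by (simp add: npair_def)
  show "\<exists>b<Suc c. npair (nfst c) b = c"
    using le_prod_encode_2[of "nsnd c" "nfst c"] c by (intro exI[of _ "nsnd c"]) (simp add: npair_def)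
  show "\<not> (\<exists>b<Suc c. npair j b = c)" if "j < nfst c" for j
    using that by (metis less_irrefl nfst_npair)
qed

lemma nsnd_eq_bounded_min: "nsnd c = bounded_min (Suc c) (\<lambda>b. \<exists>a<Suc c. npair a b = c)"
proof (rule sym, rule bounded_min_eqI)
  have c: "npair (nfst c) (nsnd c) = c" by simp
  show "nsnd c < Suc c" using le_prod_encode_2[of "nsnd c" "nfst c"] c by (simp add: npair_def)
  show "\<exists>a<Suc c. npair a (nsnd c) = c"
    using le_prod_encode_1[of "nfst c" "nsnd c"] c by (intro exI[of _ "nfst c"]) (simp add: npair_def)
  show "\<not> (\<exists>a<Suc c. npair a j = c)" if "j < nsnd c" for j
    using that by (metis less_irrefl nsnd_npair)
qed

lemma computable_nfst [computable_intros]: "computable k A \<Longrightarrow> computable k (\<lambda>xs. nfst (A xs))"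
proof -
  assume A: "computable k A"
  then have "computable k (\<lambda>xs. bounded_min (Suc (A xs)) (\<lambda>a. \<exists>b<Suc (A xs). npair a b = A xs))"
    by (intro computable_intros computable_drop1 A) simp_all
  then show ?thesis by (simp flip: nfst_eq_bounded_min)
qed

lemma computable_nsnd [computable_intros]: "computable k A \<Longrightarrow> computable k (\<lambda>xs. nsnd (A xs))"
proof -
  assume A: "computable k A"
  then have "computable k (\<lambda>xs. bounded_min (Suc (A xs)) (\<lambda>b. \<exists>a<Suc (A xs). npair a b = A xs))"
    by (intro computable_intros computable_drop1 A) simp_all
  then show ?thesis by (simp flip: nsnd_eq_bounded_min)
qed

text \<open>Lists are coded by \<^const>\<open>list_encode\<close>: \<open>0\<close> is the empty list and \<open>Suc (npair x c)\<close> is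
  \<open>x # xs\<close> where \<open>c\<close> codes \<open>xs\<close>. A list is never longer than its code, which bounds the sum
  in \<open>code_length\<close>.\<close>

definition code_hd :: "nat \<Rightarrow> nat" where "code_hd c = nfst (c - 1)"
definition code_tl :: "nat \<Rightarrow> nat" where "code_tl c = nsnd (c - 1)"
definition code_cons :: "nat \<Rightarrow> nat \<Rightarrow> nat" where "code_cons x c = Suc (npair x c)"

primrec code_drop :: "nat \<Rightarrow> nat \<Rightarrow> nat" where
  "code_drop c 0 = c"
| "code_drop c (Suc i) = code_tl (code_drop c i)"

definition code_nth :: "nat \<Rightarrow> nat \<Rightarrow> nat" where "code_nth c i = code_hd (code_drop c i)"

definition code_length :: "nat \<Rightarrow> nat" where
  "code_length c = (\<Sum>i<c. if code_drop c i = 0 then 0 else 1)"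

lemma computable_code_hd [computable_intros]: "computable k A \<Longrightarrow> computable k (\<lambda>xs. code_hd (A xs))"
  unfolding code_hd_def by (intro computable_intros)

lemma computable_code_tl [computable_intros]: "computable k A \<Longrightarrow> computable k (\<lambda>xs. code_tl (A xs))"
  unfolding code_tl_def by (intro computable_intros)

lemma computable_code_cons [computable_intros]:
  "computable k A \<Longrightarrow> computable k B \<Longrightarrow> computable k (\<lambda>xs. code_cons (A xs) (B xs))"
  unfolding code_cons_def by (intro computable_intros)

lemma computable_code_drop [computable_intros]:
  assumes "computable k A" "computable k B"
  shows "computable k (\<lambda>xs. code_drop (A xs) (B xs))"
proof -
  have "computable k (\<lambda>xs. rec_nat (A xs) (\<lambda>i acc. code_tl acc) (B xs))"
    by (rule computable_rec_nat; intro computable_intros assms) simp_all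
  moreover have "rec_nat c (\<lambda>i acc. code_tl acc) n = code_drop c n" for c n by (induction n) auto
  ultimately show ?thesis by simp
qed

lemma computable_code_nth [computable_intros]:
  "computable k A \<Longrightarrow> computable k B \<Longrightarrow> computable k (\<lambda>xs. code_nth (A xs) (B xs))"
  unfolding code_nth_def by (intro computable_intros)

lemma computable_code_length [computable_intros]:
  "computable k A \<Longrightarrow> computable k (\<lambda>xs. code_length (A xs))"
  unfolding code_length_def by (intro computable_intros computable_drop1) simp_all

lemma list_decode_nonzero: "c \<noteq> 0 \<Longrightarrow> list_decode c = code_hd c # list_decode (code_tl c)"
  by (cases c) (auto simp: code_hd_def code_tl_def nfst_def nsnd_def split: prod.splits)

lemma list_decode_eq_Nil_iff: "list_decode c = [] \<longleftrightarrow> c = 0"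
  by (metis list_decode.simps(1) list_decode_eq)

lemma list_decode_code_tl: "list_decode (code_tl c) = tl (list_decode c)"
proof (cases "c = 0")
  case True
  then show ?thesis by (simp add: code_tl_def nsnd_def prod_decode_def prod_decode_aux.simps)
qed (simp add: list_decode_nonzero)

lemma list_decode_code_drop: "list_decode (code_drop c i) = drop i (list_decode c)"
  by (induction i) (simp_all add: list_decode_code_tl drop_Suc tl_drop[symmetric])

lemma code_nth_eq_nth: "i < length (list_decode c) \<Longrightarrow> code_nth c i = list_decode c ! i"
proof -
  assume i: "i < length (list_decode c)"
  then have "code_drop c i \<noteq> 0"
    using list_decode_code_drop[of c i] by (metis drop_eq_Nil leD list_decode.simps(1))
  then have "drop i (list_decode c) = code_nth c i # list_decode (code_tl (code_drop c i))"
    using list_decode_code_drop[of c i] list_decode_nonzero by (simp add: code_nth_def)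
  then show ?thesis by (metis nth_via_drop)
qed

lemma length_le_list_encode: "length xs \<le> list_encode xs"
proof (induction xs)
  case (Cons x xs)
  then show ?case using le_prod_encode_2[of "list_encode xs" x] by simp
qed simp

lemma code_length_eq_length: "code_length c = length (list_decode c)"
proof -
  have L: "length (list_decode c) \<le> c" using length_le_list_encode[of "list_decode c"] by simp
  have "(code_drop c i = 0) = (\<not> i < length (list_decode c))" for i
    using list_decode_code_drop[of c i] list_decode_eq_Nil_iff[of "code_drop c i"]
    by (metis drop_eq_Nil not_le)
  then have "code_length c = (\<Sum>i<c. if i < length (list_decode c) then 1 else (0::nat))"
    unfolding code_length_def by (intro sum.cong) auto
  also have "\<dots> = card {i. i < c \<and> i < length (list_decode c)}"
    by (simp add: sum.If_cases Int_def)
  also have "{i. i < c \<and> i < length (list_decode c)} = {..<length (list_decode c)}" using L by auto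
  finally show ?thesis by simp
qed

lemma code_cons_list_encode: "code_cons x (list_encode xs) = list_encode (x # xs)"
  by (simp add: code_cons_def npair_def)

lemma code_length_list_encode [simp]: "code_length (list_encode xs) = length xs"
  by (simp add: code_length_eq_length)

lemma code_nth_list_encode [simp]: "i < length xs \<Longrightarrow> code_nth (list_encode xs) i = xs ! i"
  by (simp add: code_nth_eq_nth)

lemma code_tl_list_encode [simp]: "code_tl (list_encode (x # xs)) = list_encode xs"
  by (simp add: code_tl_def nsnd_def)

lemma list_decode_code_cons: "list_decode (code_cons x c) = x # list_decode c"
  by (metis code_cons_list_encode list_decode_inverse list_encode_inverse)

declare list_encode.simps(2) [simp del]

lemma computable_lift1:
  "computable 1 (\<lambda>xs. F (xs ! 0)) \<Longrightarrow> computable k A \<Longrightarrow> computable k (\<lambda>xs. F (A xs))"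
  using computable_comp[of 1 "\<lambda>xs. F (xs ! 0)" "[A]" k] by simp

lemma computable_lift2:
  "computable 2 (\<lambda>xs. F (xs ! 0) (xs ! 1)) \<Longrightarrow> computable k A \<Longrightarrow> computable k B \<Longrightarrow>
    computable k (\<lambda>xs. F (A xs) (B xs))"
  using computable_comp[of 2 "\<lambda>xs. F (xs ! 0) (xs ! 1)" "[A, B]" k] by simp

lemma computable_lift3:
  "computable 3 (\<lambda>xs. F (xs ! 0) (xs ! 1) (xs ! 2)) \<Longrightarrow>
    computable k A \<Longrightarrow> computable k B \<Longrightarrow> computable k C \<Longrightarrow>
    computable k (\<lambda>xs. F (A xs) (B xs) (C xs))"
  using computable_comp[of 3 "\<lambda>xs. F (xs ! 0) (xs ! 1) (xs ! 2)" "[A, B, C]" k]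
  by (simp add: numeral_3_eq_3)

lemma computable_lift4:
  "computable 4 (\<lambda>xs. F (xs ! 0) (xs ! 1) (xs ! 2) (xs ! 3)) \<Longrightarrow>
    computable k A \<Longrightarrow> computable k B \<Longrightarrow> computable k C \<Longrightarrow> computable k D \<Longrightarrow>
    computable k (\<lambda>xs. F (A xs) (B xs) (C xs) (D xs))"
  using computable_comp[of 4 "\<lambda>xs. F (xs ! 0) (xs ! 1) (xs ! 2) (xs ! 3)" "[A, B, C, D]" k]
  by (simp add: numeral_3_eq_3 numeral_Bit0)

lemma decidable_lift1:
  "decidable 1 (\<lambda>xs. P (xs ! 0)) \<Longrightarrow> computable k A \<Longrightarrow> decidable k (\<lambda>xs. P (A xs))"
  unfolding decidable_def by (rule computable_lift1[where F = "\<lambda>a. if P a then 1 else 0"])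

lemma decidable_lift3:
  "decidable 3 (\<lambda>xs. P (xs ! 0) (xs ! 1) (xs ! 2)) \<Longrightarrow>
    computable k A \<Longrightarrow> computable k B \<Longrightarrow> computable k C \<Longrightarrow>
    decidable k (\<lambda>xs. P (A xs) (B xs) (C xs))"
  unfolding decidable_def by (rule computable_lift3[where F = "\<lambda>a b c. if P a b c then 1 else 0"])

lemma decidable_lift4:
  "decidable 4 (\<lambda>xs. P (xs ! 0) (xs ! 1) (xs ! 2) (xs ! 3)) \<Longrightarrow>
    computable k A \<Longrightarrow> computable k B \<Longrightarrow> computable k C \<Longrightarrow> computable k D \<Longrightarrow>
    decidable k (\<lambda>xs. P (A xs) (B xs) (C xs) (D xs))"
  unfolding decidable_def by (rule computable_lift4[where F = "\<lambda>a b c d. if P a b c d then 1 else 0"])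

section \<open>A universal evaluator with bounded running time\<close>

fun prog_code :: "recf \<Rightarrow> nat" where
  "prog_code Zf = npair 0 0"
| "prog_code Sf = npair 1 0"
| "prog_code (Idf i) = npair 2 i"
| "prog_code (Cnf f gs) = npair 3 (npair (prog_code f) (list_encode (map prog_code gs)))"
| "prog_code (Prf f g) = npair 4 (npair (prog_code f) (prog_code g))"
| "prog_code (Mnf f) = npair 5 (prog_code f)"

text \<open>An entry \<open>entry c x y a\<close> of a derivation claims that the program coded by \<open>c\<close> maps the
  arguments coded by \<open>x\<close> to \<open>y\<close>; the auxiliary value \<open>a\<close> codes the intermediate results of a
  composition and the previous value of a primitive recursion.\<close>

definition entry :: "nat \<Rightarrow> nat \<Rightarrow> nat \<Rightarrow> nat \<Rightarrow> nat" where
  "entry c x y a = npair c (npair x (npair y a))"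

definition entry_prog :: "nat \<Rightarrow> nat" where "entry_prog e = nfst e"
definition entry_in :: "nat \<Rightarrow> nat" where "entry_in e = nfst (nsnd e)"
definition entry_out :: "nat \<Rightarrow> nat" where "entry_out e = nfst (nsnd (nsnd e))"
definition entry_aux :: "nat \<Rightarrow> nat" where "entry_aux e = nsnd (nsnd (nsnd e))"

lemma entry_sel [simp]:
  "entry_prog (entry c x y a) = c" "entry_in (entry c x y a) = x"
  "entry_out (entry c x y a) = y" "entry_aux (entry c x y a) = a"
  by (simp_all add: entry_prog_def entry_in_def entry_out_def entry_aux_def entry_def)

lemma computable_entry_sel [computable_intros]:
  "computable k A \<Longrightarrow> computable k (\<lambda>xs. entry_prog (A xs))"
  "computable k A \<Longrightarrow> computable k (\<lambda>xs. entry_in (A xs))"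
  "computable k A \<Longrightarrow> computable k (\<lambda>xs. entry_out (A xs))"
  "computable k A \<Longrightarrow> computable k (\<lambda>xs. entry_aux (A xs))"
  unfolding entry_prog_def entry_in_def entry_out_def entry_aux_def
  by (intro computable_intros | assumption)+

text \<open>\<open>R c x y\<close>: the claim \<open>(c, x, y)\<close> has been derived before; \<open>Q c x\<close>: some claim \<open>(c, x, y)\<close>
  with \<open>y > 0\<close> has.\<close>

definition justified :: "nat \<Rightarrow> (nat \<Rightarrow> nat \<Rightarrow> nat \<Rightarrow> bool) \<Rightarrow> (nat \<Rightarrow> nat \<Rightarrow> bool) \<Rightarrow> bool" where
  "justified e R Q \<longleftrightarrow>
    (let c = entry_prog e; x = entry_in e; y = entry_out e; a = entry_aux e in
      (nfst c = 0 \<and> y = 0) \<or>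
      (nfst c = 1 \<and> 0 < code_length x \<and> y = Suc (code_nth x 0)) \<or>
      (nfst c = 2 \<and> nsnd c < code_length x \<and> y = code_nth x (nsnd c)) \<or>
      (nfst c = 3 \<and> code_length a = code_length (nsnd (nsnd c)) \<and>
        (\<forall>l<code_length (nsnd (nsnd c)). R (code_nth (nsnd (nsnd c)) l) x (code_nth a l)) \<and>
        R (nfst (nsnd c)) a y) \<or>
      (nfst c = 4 \<and> 0 < code_length x \<and>
        ((code_nth x 0 = 0 \<and> R (nfst (nsnd c)) (code_tl x) y) \<or>
         (0 < code_nth x 0 \<and> R c (code_cons (code_nth x 0 - 1) (code_tl x)) a \<and>
          R (nsnd (nsnd c)) (code_cons (code_nth x 0 - 1) (code_cons a (code_tl x))) y))) \<or>
      (nfst c = 5 \<and> R (nsnd c) (code_cons y x) 0 \<and> (\<forall>m<y. Q (nsnd c) (code_cons m x))))"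

lemma justified_mono:
  assumes "justified e R Q" "\<And>c x y. R c x y \<Longrightarrow> R' c x y" "\<And>c x. Q c x \<Longrightarrow> Q' c x"
  shows "justified e R' Q'"
  using assms(1) unfolding justified_def Let_def
  by (elim disjE conjE) (simp_all add: assms(2,3))

lemma justified_Zf: "entry_prog e = prog_code Zf \<Longrightarrow> justified e R Q \<longleftrightarrow> entry_out e = 0"
  unfolding justified_def Let_def by simp

lemma justified_Sf:
  "entry_prog e = prog_code Sf \<Longrightarrow>
    justified e R Q \<longleftrightarrow> 0 < code_length (entry_in e) \<and> entry_out e = Suc (code_nth (entry_in e) 0)"
  unfolding justified_def Let_def by simp

lemma justified_Idf:
  "entry_prog e = prog_code (Idf j) \<Longrightarrow>
    justified e R Q \<longleftrightarrow> j < code_length (entry_in e) \<and> entry_out e = code_nth (entry_in e) j"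
  unfolding justified_def Let_def by simp

lemma justified_Cnf:
  "entry_prog e = prog_code (Cnf g gs) \<Longrightarrow> justified e R Q \<longleftrightarrow>
    code_length (entry_aux e) = length gs \<and>
    (\<forall>l<length gs. R (prog_code (gs ! l)) (entry_in e) (code_nth (entry_aux e) l)) \<and>
    R (prog_code g) (entry_aux e) (entry_out e)"
  unfolding justified_def Let_def by simp

lemma justified_Prf:
  "entry_prog e = prog_code (Prf g h) \<Longrightarrow> justified e R Q \<longleftrightarrow> 0 < code_length (entry_in e) \<and>
    ((code_nth (entry_in e) 0 = 0 \<and> R (prog_code g) (code_tl (entry_in e)) (entry_out e)) \<or>
     (0 < code_nth (entry_in e) 0 \<and>
      R (prog_code (Prf g h)) (code_cons (code_nth (entry_in e) 0 - 1) (code_tl (entry_in e)))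
        (entry_aux e) \<and>
      R (prog_code h)
        (code_cons (code_nth (entry_in e) 0 - 1) (code_cons (entry_aux e) (code_tl (entry_in e))))
        (entry_out e)))"
  unfolding justified_def Let_def by simp

lemma justified_Mnf:
  "entry_prog e = prog_code (Mnf g) \<Longrightarrow> justified e R Q \<longleftrightarrow>
    R (prog_code g) (code_cons (entry_out e) (entry_in e)) 0 \<and>
    (\<forall>m<entry_out e. Q (prog_code g) (code_cons m (entry_in e)))"
  unfolding justified_def Let_def by simp

definition derives :: "nat list \<Rightarrow> nat \<Rightarrow> nat \<Rightarrow> nat \<Rightarrow> bool" where
  "derives es c x y \<longleftrightarrow> (\<exists>e\<in>set es. entry_prog e = c \<and> entry_in e = x \<and> entry_out e = y)"

definition derives_pos :: "nat list \<Rightarrow> nat \<Rightarrow> nat \<Rightarrow> bool" where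
  "derives_pos es c x \<longleftrightarrow> (\<exists>e\<in>set es. entry_prog e = c \<and> entry_in e = x \<and> 0 < entry_out e)"

definition valid_entries :: "nat list \<Rightarrow> bool" where
  "valid_entries es \<longleftrightarrow>
    (\<forall>i<length es. justified (es ! i) (derives (take i es)) (derives_pos (take i es)))"

lemma valid_entries_Nil [simp]: "valid_entries []"
  by (simp add: valid_entries_def)

lemma valid_entries_snoc:
  "valid_entries (es @ [e]) \<longleftrightarrow> valid_entries es \<and> justified e (derives es) (derives_pos es)"
  unfolding valid_entries_def by (auto simp: nth_append less_Suc_eq)

lemma valid_entries_append:
  assumes "valid_entries es1" "valid_entries es2"
  shows "valid_entries (es1 @ es2)"
  unfolding valid_entries_def
proof (intro allI impI)
  fix i assume i: "i < length (es1 @ es2)"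
  show "justified ((es1 @ es2) ! i) (derives (take i (es1 @ es2))) (derives_pos (take i (es1 @ es2)))"
  proof (cases "i < length es1")
    case True
    then show ?thesis using assms(1) by (simp add: valid_entries_def nth_append)
  next
    case False
    let ?j = "i - length es1"
    have J: "justified (es2 ! ?j) (derives (take ?j es2)) (derives_pos (take ?j es2))"
      using assms(2) i False by (auto simp: valid_entries_def)
    show ?thesis
      using False by (simp add: nth_append)
        (rule justified_mono[OF J]; auto simp: derives_def derives_pos_def)
  qed
qed

lemma derives_append:
  "derives es1 c x y \<Longrightarrow> derives (es1 @ es2) c x y"
  "derives es2 c x y \<Longrightarrow> derives (es1 @ es2) c x y"
  by (auto simp: derives_def)

lemma derives_pos_append:
  "derives_pos es1 c x \<Longrightarrow> derives_pos (es1 @ es2) c x"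
  "derives_pos es2 c x \<Longrightarrow> derives_pos (es1 @ es2) c x"
  by (auto simp: derives_pos_def)

lemma derives_pos_iff: "derives_pos es c x \<longleftrightarrow> (\<exists>y. derives es c x (Suc y))"
  unfolding derives_pos_def derives_def by (metis gr0_conv_Suc)

context
  fixes R :: "nat \<Rightarrow> nat \<Rightarrow> nat \<Rightarrow> bool" and Q :: "nat \<Rightarrow> nat \<Rightarrow> bool"
  assumes R_sound: "\<And>g x y. R (prog_code g) x y \<Longrightarrow> reval g (list_decode x) y"
    and Q_sound: "\<And>g x. Q (prog_code g) x \<Longrightarrow> \<exists>y. reval g (list_decode x) (Suc y)"
begin

lemma justified_Cnf_sound:
  assumes J: "justified e R Q" and c: "entry_prog e = prog_code (Cnf g gs)"
  shows "reval (Cnf g gs) (list_decode (entry_in e)) (entry_out e)"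
proof -
  define xs ys where "xs = list_decode (entry_in e)" and "ys = list_decode (entry_aux e)"
  have J': "code_length (entry_aux e) = length gs"
    "\<forall>l<length gs. R (prog_code (gs ! l)) (entry_in e) (code_nth (entry_aux e) l)"
    "R (prog_code g) (entry_aux e) (entry_out e)"
    using J c justified_Cnf by auto
  have "length ys = length gs" using J' by (simp add: ys_def code_length_eq_length)
  moreover have "reval (gs ! l) xs (ys ! l)" if "l < length gs" for l
    using R_sound[OF J'(2)[rule_format, OF that]] that J'(1) unfolding xs_def ys_def
    by (simp add: code_nth_eq_nth code_length_eq_length)
  ultimately have "list_all2 (\<lambda>g y. reval g xs y) gs ys" by (simp add: list_all2_conv_all_nth)
  moreover have "reval g ys (entry_out e)" using R_sound[OF J'(3)] by (simp add: ys_def)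
  ultimately show ?thesis unfolding xs_def by (rule reval_Cn)
qed

lemma justified_Prf_sound:
  assumes J: "justified e R Q" and c: "entry_prog e = prog_code (Prf g h)"
  shows "reval (Prf g h) (list_decode (entry_in e)) (entry_out e)"
proof -
  define xs where "xs = list_decode (entry_in e)"
  have xe: "entry_in e = list_encode xs" by (simp add: xs_def)
  let ?x = "entry_in e" and ?y = "entry_out e" and ?a = "entry_aux e"
  have J': "0 < length xs"
    "(xs ! 0 = 0 \<and> R (prog_code g) (code_tl ?x) ?y) \<or>
     (0 < xs ! 0 \<and> R (prog_code (Prf g h)) (code_cons (xs ! 0 - 1) (code_tl ?x)) ?a \<and>
      R (prog_code h) (code_cons (xs ! 0 - 1) (code_cons ?a (code_tl ?x))) ?y)"
    using J c xe justified_Prf[of e g h] by (auto simp: code_nth_eq_nth)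
  then obtain x0 rest where xs: "xs = x0 # rest" by (cases xs) auto
  have tl: "list_decode (code_tl ?x) = rest" by (simp add: list_decode_code_tl xe xs)
  show ?thesis
  proof (cases x0)
    case 0
    then have "reval g rest ?y" using J' R_sound[of g "code_tl ?x" ?y] tl xs by auto
    then show ?thesis using xs 0 by (auto simp: xs_def intro: reval_Pr0)
  next
    case (Suc n)
    then have R1: "R (prog_code (Prf g h)) (code_cons n (code_tl ?x)) ?a"
      and R2: "R (prog_code h) (code_cons n (code_cons ?a (code_tl ?x))) ?y"
      using J' xs by auto
    have "reval (Prf g h) (n # rest) ?a"
      using R_sound[OF R1] tl by (simp add: list_decode_code_cons)
    moreover have "reval h (n # ?a # rest) ?y"
      using R_sound[OF R2] tl by (simp add: list_decode_code_cons)
    ultimately show ?thesis using xs Suc by (auto simp: xs_def intro: reval_PrS)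
  qed
qed

lemma justified_sound:
  assumes J: "justified e R Q" and c: "entry_prog e = prog_code f"
  shows "reval f (list_decode (entry_in e)) (entry_out e)"
proof -
  define xs where "xs = list_decode (entry_in e)"
  have xe: "entry_in e = list_encode xs" by (simp add: xs_def)
  show ?thesis unfolding xs_def[symmetric]
  proof (cases f)
    case Zf
    then show "reval f xs (entry_out e)" using J c justified_Zf by (auto intro: reval_Z)
  next
    case Sf
    then have "0 < length xs" "entry_out e = Suc (xs ! 0)" using J c xe justified_Sf by auto
    then show "reval f xs (entry_out e)" using Sf by (cases xs) (auto intro: reval_S)
  next
    case (Idf j)
    then have "j < length xs" "entry_out e = xs ! j" using J c xe justified_Idf by auto
    then show "reval f xs (entry_out e)" using Idf by (auto intro: reval_Id)
  next
    case (Cnf g gs)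
    then show "reval f xs (entry_out e)" using justified_Cnf_sound J c by (simp add: xs_def)
  next
    case (Prf g h)
    then show "reval f xs (entry_out e)" using justified_Prf_sound J c by (simp add: xs_def)
  next
    case (Mnf g)
    then have J': "R (prog_code g) (code_cons (entry_out e) (entry_in e)) 0"
        "\<forall>m<entry_out e. Q (prog_code g) (code_cons m (entry_in e))"
      using J c justified_Mnf by auto
    have "reval g (entry_out e # xs) 0"
      using R_sound[OF J'(1)] by (simp add: list_decode_code_cons xs_def)
    moreover have "\<exists>y. reval g (m # xs) (Suc y)" if "m < entry_out e" for m
      using Q_sound J'(2) that by (fastforce simp: list_decode_code_cons xs_def)
    ultimately show "reval f xs (entry_out e)" using Mnf by (auto intro: reval_Mn)
  qed
qed

end

lemma valid_entries_sound:
  "valid_entries es \<Longrightarrow> derives es (prog_code f) x y \<Longrightarrow> reval f (list_decode x) y"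
proof (induction es arbitrary: f x y rule: rev_induct)
  case Nil
  then show ?case by (simp add: derives_def)
next
  case (snoc e es)
  have valid: "valid_entries es" and J: "justified e (derives es) (derives_pos es)"
    using snoc.prems(1) by (simp_all add: valid_entries_snoc)
  have Q_sound: "\<exists>y. reval g (list_decode x) (Suc y)" if "derives_pos es (prog_code g) x" for g x
    using that snoc.IH[OF valid] by (auto simp: derives_pos_iff)
  show ?case
  proof (cases "derives es (prog_code f) x y")
    case True
    then show ?thesis using snoc.IH[OF valid] by blast
  next
    case False
    then have "entry_prog e = prog_code f" "entry_in e = x" "entry_out e = y"
      using snoc.prems(2) by (auto simp: derives_def)
    then show ?thesis
      using justified_sound[of "derives es" "derives_pos es", OF snoc.IH[OF valid] Q_sound J] by simp
  qed
qed

definition derivable :: "nat \<Rightarrow> nat \<Rightarrow> nat \<Rightarrow> bool" where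
  "derivable c x y \<longleftrightarrow> (\<exists>es. valid_entries es \<and> derives es c x y)"

lemma derivable_snoc:
  assumes "valid_entries es" "justified (entry c x y a) (derives es) (derives_pos es)"
  shows "derivable c x y"
  unfolding derivable_def using assms
  by (intro exI[of _ "es @ [entry c x y a]"]) (auto simp: valid_entries_snoc derives_def)

lemma valid_entries_combine_list:
  assumes "list_all2 (\<lambda>g y. derivable (prog_code g) x y) gs ys"
  shows "\<exists>es. valid_entries es \<and> (\<forall>l<length gs. derives es (prog_code (gs ! l)) x (ys ! l))"
  using assms
proof (induction rule: list_all2_induct)
  case Nil
  show ?case by (intro exI[of _ "[]"]) simp
next
  case (Cons g gs y ys)
  obtain es1 where "valid_entries es1" "derives es1 (prog_code g) x y"
    using Cons.hyps unfolding derivable_def by auto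
  moreover obtain es2 where "valid_entries es2" "\<forall>l<length gs. derives es2 (prog_code (gs ! l)) x (ys ! l)"
    using Cons.IH by auto
  ultimately show ?case
    by (intro exI[of _ "es1 @ es2"])
      (auto simp: valid_entries_append derives_append nth_Cons' split: nat.split)
qed

lemma valid_entries_combine_pos:
  fixes n :: nat
  assumes "\<forall>m<n. \<exists>y. derivable c (X m) (Suc y)"
  shows "\<exists>es. valid_entries es \<and> (\<forall>m<n. derives_pos es c (X m))"
  using assms
proof (induction n)
  case 0
  show ?case by (intro exI[of _ "[]"]) simp
next
  case (Suc n)
  obtain es1 where e1: "valid_entries es1" "\<forall>m<n. derives_pos es1 c (X m)" using Suc by auto
  obtain es2 where e2: "valid_entries es2" "derives_pos es2 c (X n)"
    using Suc.prems unfolding derivable_def derives_pos_iff by blast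
  show ?case
    by (intro exI[of _ "es1 @ es2"] conjI valid_entries_append e1(1) e2(1))
      (use e1(2) e2(2) in \<open>auto simp: less_Suc_eq intro: derives_pos_append\<close>)
qed

lemma derivable_Cnf:
  assumes "list_all2 (\<lambda>g y. derivable (prog_code g) x y) gs ys" "derivable (prog_code f) (list_encode ys) z"
  shows "derivable (prog_code (Cnf f gs)) x z"
proof -
  obtain es1 where e1: "valid_entries es1" "\<forall>l<length gs. derives es1 (prog_code (gs ! l)) x (ys ! l)"
    using valid_entries_combine_list[OF assms(1)] by auto
  obtain es2 where e2: "valid_entries es2" "derives es2 (prog_code f) (list_encode ys) z"
    using assms(2) unfolding derivable_def by auto
  show ?thesis
    using e1(2) e2(2) list_all2_lengthD[OF assms(1)]
    by (intro derivable_snoc[OF valid_entries_append[OF e1(1) e2(1)], where a = "list_encode ys"])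
      (simp add: justified_Cnf derives_append)
qed

lemma derivable_Prf_Suc:
  assumes "derivable (prog_code (Prf f g)) (list_encode (n # xs)) y"
    "derivable (prog_code g) (list_encode (n # y # xs)) z"
  shows "derivable (prog_code (Prf f g)) (list_encode (Suc n # xs)) z"
proof -
  obtain es1 es2 where e: "valid_entries es1" "derives es1 (prog_code (Prf f g)) (list_encode (n # xs)) y"
    "valid_entries es2" "derives es2 (prog_code g) (list_encode (n # y # xs)) z"
    using assms unfolding derivable_def by auto
  show ?thesis
    using derives_append(1)[OF e(2)] derives_append(2)[OF e(4)]
    by (intro derivable_snoc[OF valid_entries_append[OF e(1) e(3)], where a = y])
      (simp add: justified_Prf code_cons_list_encode)
qed

lemma derivable_Mnf:
  assumes "derivable (prog_code f) (code_cons n x) 0"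
    and "\<forall>m<n. \<exists>y. derivable (prog_code f) (code_cons m x) (Suc y)"
  shows "derivable (prog_code (Mnf f)) x n"
proof -
  obtain es1 where e1: "valid_entries es1" "derives es1 (prog_code f) (code_cons n x) 0"
    using assms(1) unfolding derivable_def by auto
  obtain es2 where e2: "valid_entries es2" "\<forall>m<n. derives_pos es2 (prog_code f) (code_cons m x)"
    using valid_entries_combine_pos[OF assms(2)] by auto
  show ?thesis
    using derives_append(1)[OF e1(2)] e2(2)
    by (intro derivable_snoc[OF valid_entries_append[OF e1(1) e2(1)], where a = 0])
      (simp add: justified_Mnf derives_pos_append)
qed

lemma reval_imp_derivable: "reval f xs y \<Longrightarrow> derivable (prog_code f) (list_encode xs) y"
proof (induction rule: reval.induct)
  case (reval_Z xs)
  show ?case by (rule derivable_snoc[OF valid_entries_Nil, where a = 0]) (simp add: justified_Zf)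
next
  case (reval_S x xs)
  show ?case by (rule derivable_snoc[OF valid_entries_Nil, where a = 0]) (simp add: justified_Sf)
next
  case (reval_Id i xs)
  then show ?case by (intro derivable_snoc[OF valid_entries_Nil, where a = 0]) (simp add: justified_Idf)
next
  case (reval_Cn xs gs ys f z)
  then show ?case by (intro derivable_Cnf) (auto elim: list_all2_mono)
next
  case (reval_Pr0 f xs z g)
  then obtain es where "valid_entries es" "derives es (prog_code f) (list_encode xs) z"
    unfolding derivable_def by auto
  then show ?case by (intro derivable_snoc[where a = 0]) (simp_all add: justified_Prf)
next
  case (reval_PrS f g n xs y z)
  then show ?case by (intro derivable_Prf_Suc)
next
  case (reval_Mn f n xs)
  then show ?case by (intro derivable_Mnf) (auto simp: code_cons_list_encode)
qed

inductive_cases reval_ZfE: "reval Zf xs y"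
inductive_cases reval_SfE: "reval Sf xs y"
inductive_cases reval_IdfE: "reval (Idf i) xs y"
inductive_cases reval_CnfE: "reval (Cnf f gs) xs y"
inductive_cases reval_PrfE: "reval (Prf f g) xs y"
inductive_cases reval_MnfE: "reval (Mnf f) xs y"

lemma reval_functional: "reval f xs y \<Longrightarrow> reval f xs y' \<Longrightarrow> y' = y"
proof (induction f xs y arbitrary: y' rule: reval.induct)
  case (reval_Z xs)
  then show ?case by (cases rule: reval_ZfE) auto
next
  case (reval_S x xs)
  then show ?case by (cases rule: reval_SfE) auto
next
  case (reval_Id i xs)
  then show ?case by (cases rule: reval_IdfE) auto
next
  case (reval_Cn xs gs ys f z)
  from reval_Cn.prems obtain ys' where ys': "list_all2 (\<lambda>g y. reval g xs y) gs ys'" "reval f ys' y'"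
    by (cases rule: reval_CnfE) auto
  have "list_all2 (\<lambda>g y. reval g xs y \<and> (\<forall>y'. reval g xs y' \<longrightarrow> y' = y)) gs ys"
    using reval_Cn(1) by (simp add: list_all2_conv_all_nth)
  then have "ys' = ys" using ys'(1)
    by (auto simp: list_all2_conv_all_nth intro!: nth_equalityI)
  then show ?case using reval_Cn.IH(2) ys'(2) by blast
next
  case (reval_Pr0 f xs z g)
  from reval_Pr0.prems show ?case by (cases rule: reval_PrfE) (use reval_Pr0.IH in auto)
next
  case (reval_PrS f g n xs y z)
  from reval_PrS.prems obtain y2 where "reval (Prf f g) (n # xs) y2" "reval g (n # y2 # xs) y'"
    by (cases rule: reval_PrfE) auto
  then show ?case using reval_PrS.IH by auto
next
  case (reval_Mn f n xs)
  from reval_Mn.prems have y': "reval f (y' # xs) 0" "\<forall>m<y'. \<exists>y. reval f (m # xs) (Suc y)"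
    by (auto elim: reval_MnfE)
  show ?case
  proof (rule linorder_cases[of y' n])
    assume "y' < n"
    then obtain y where "\<forall>w. reval f (y' # xs) w \<longrightarrow> w = Suc y" using reval_Mn.IH(2) by blast
    then show ?case using y'(1) by blast
  next
    assume "n < y'"
    then obtain y where "reval f (n # xs) (Suc y)" using y'(2) by blast
    then show ?case using reval_Mn.IH(1) by blast
  qed
qed

definition trace_derives :: "nat \<Rightarrow> nat \<Rightarrow> nat \<Rightarrow> nat \<Rightarrow> nat \<Rightarrow> bool" where
  "trace_derives t i c x y \<longleftrightarrow>
    (\<exists>j<i. entry_prog (code_nth t j) = c \<and> entry_in (code_nth t j) = x \<and> entry_out (code_nth t j) = y)"

definition trace_derives_pos :: "nat \<Rightarrow> nat \<Rightarrow> nat \<Rightarrow> nat \<Rightarrow> bool" where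
  "trace_derives_pos t i c x \<longleftrightarrow>
    (\<exists>j<i. entry_prog (code_nth t j) = c \<and> entry_in (code_nth t j) = x \<and> 0 < entry_out (code_nth t j))"

definition valid_trace :: "nat \<Rightarrow> bool" where
  "valid_trace t \<longleftrightarrow>
    (\<forall>i<code_length t. justified (code_nth t i) (trace_derives t i) (trace_derives_pos t i))"

lemma decidable_valid_trace [computable_intros]:
  "computable k A \<Longrightarrow> decidable k (\<lambda>xs. valid_trace (A xs))"
proof (rule decidable_lift1)
  show "decidable 1 (\<lambda>xs. valid_trace (xs ! 0))"
    unfolding valid_trace_def justified_def trace_derives_def trace_derives_pos_def Let_def
    by (intro computable_intros) simp_all
qed

lemma bex_code_nth_list_encode_iff:
  assumes "i \<le> length es"
  shows "(\<exists>j<i. P (code_nth (list_encode es) j)) \<longleftrightarrow> (\<exists>e\<in>set (take i es). P e)"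
proof
  assume "\<exists>j<i. P (code_nth (list_encode es) j)"
  then obtain j where "j < i" "P (code_nth (list_encode es) j)" by blast
  then show "\<exists>e\<in>set (take i es). P e"
    using assms by (intro bexI[of _ "es ! j"]) (auto simp: in_set_conv_nth intro!: exI[of _ j])
next
  assume "\<exists>e\<in>set (take i es). P e"
  then obtain j where "j < length (take i es)" "P (take i es ! j)" by (auto simp: in_set_conv_nth)
  then show "\<exists>j<i. P (code_nth (list_encode es) j)"
    using assms by (intro exI[of _ j]) auto
qed

lemma valid_trace_list_encode: "valid_trace (list_encode es) \<longleftrightarrow> valid_entries es"
proof -
  have "trace_derives (list_encode es) i = derives (take i es)" if "i < length es" for i
  proof (intro ext)
    fix c x y
    show "trace_derives (list_encode es) i c x y = derives (take i es) c x y"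
      using bex_code_nth_list_encode_iff[of i es "\<lambda>e. entry_prog e = c \<and> entry_in e = x \<and> entry_out e = y"]
        that unfolding trace_derives_def derives_def by simp
  qed
  moreover have "trace_derives_pos (list_encode es) i = derives_pos (take i es)" if "i < length es" for i
  proof (intro ext)
    fix c x
    show "trace_derives_pos (list_encode es) i c x = derives_pos (take i es) c x"
      using bex_code_nth_list_encode_iff[of i es "\<lambda>e. entry_prog e = c \<and> entry_in e = x \<and> 0 < entry_out e"]
        that unfolding trace_derives_pos_def derives_pos_def by simp
  qed
  ultimately show ?thesis unfolding valid_trace_def valid_entries_def by auto
qed

lemma valid_trace_sound:
  assumes "valid_trace t" "i < code_length t" "entry_prog (code_nth t i) = prog_code f"
  shows "reval f (list_decode (entry_in (code_nth t i))) (entry_out (code_nth t i))"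
proof (rule valid_entries_sound)
  show "valid_entries (list_decode t)"
    using assms(1) valid_trace_list_encode[of "list_decode t"] by simp
  show "derives (list_decode t) (prog_code f) (entry_in (code_nth t i)) (entry_out (code_nth t i))"
    using assms(2,3) by (auto simp: derives_def code_length_eq_length code_nth_eq_nth)
qed

definition trace_covers :: "nat \<Rightarrow> nat \<Rightarrow> nat \<Rightarrow> bool" where
  "trace_covers t c x \<longleftrightarrow>
    valid_trace t \<and> (\<exists>i<code_length t. entry_prog (code_nth t i) = c \<and> entry_in (code_nth t i) = x)"

definition halts_within :: "nat \<Rightarrow> nat \<Rightarrow> nat \<Rightarrow> bool" where
  "halts_within c x n \<longleftrightarrow> (\<exists>t<Suc n. trace_covers t c x)"

definition first_covering_trace :: "nat \<Rightarrow> nat \<Rightarrow> nat \<Rightarrow> nat" where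
  "first_covering_trace c x n = bounded_min (Suc n) (\<lambda>t. trace_covers t c x)"

definition covering_entry :: "nat \<Rightarrow> nat \<Rightarrow> nat \<Rightarrow> nat" where
  "covering_entry t c x =
    bounded_min (code_length t) (\<lambda>i. entry_prog (code_nth t i) = c \<and> entry_in (code_nth t i) = x)"

definition output_within :: "nat \<Rightarrow> nat \<Rightarrow> nat \<Rightarrow> nat" where
  "output_within c x n =
    (let t = first_covering_trace c x n in entry_out (code_nth t (covering_entry t c x)))"

lemma decidable_halts_within [computable_intros]:
  assumes "computable k A" "computable k B" "computable k C"
  shows "decidable k (\<lambda>xs. halts_within (A xs) (B xs) (C xs))"
proof -
  have "decidable 3 (\<lambda>xs. halts_within (xs ! 0) (xs ! 1) (xs ! 2))"
    unfolding halts_within_def trace_covers_def by (intro computable_intros) simp_all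
  from decidable_lift3[OF this assms] show ?thesis .
qed

lemma computable_first_covering_trace [computable_intros]:
  assumes "computable k A" "computable k B" "computable k C"
  shows "computable k (\<lambda>xs. first_covering_trace (A xs) (B xs) (C xs))"
proof -
  have "computable 3 (\<lambda>xs. first_covering_trace (xs ! 0) (xs ! 1) (xs ! 2))"
    unfolding first_covering_trace_def trace_covers_def by (intro computable_intros) simp_all
  from computable_lift3[OF this assms] show ?thesis .
qed

lemma computable_covering_entry [computable_intros]:
  assumes "computable k A" "computable k B" "computable k C"
  shows "computable k (\<lambda>xs. covering_entry (A xs) (B xs) (C xs))"
proof -
  have "computable 3 (\<lambda>xs. covering_entry (xs ! 0) (xs ! 1) (xs ! 2))"
    unfolding covering_entry_def by (intro computable_intros) simp_all
  from computable_lift3[OF this assms] show ?thesis .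
qed

lemma computable_output_within [computable_intros]:
  "computable k A \<Longrightarrow> computable k B \<Longrightarrow> computable k C \<Longrightarrow>
    computable k (\<lambda>xs. output_within (A xs) (B xs) (C xs))"
  unfolding output_within_def Let_def by (intro computable_intros)

lemma halts_within_mono: "halts_within c x n \<Longrightarrow> n \<le> n' \<Longrightarrow> halts_within c x n'"
  unfolding halts_within_def by (auto intro: order.strict_trans2)

lemma output_within_stable:
  assumes "halts_within c x n" "n \<le> n'"
  shows "output_within c x n' = output_within c x n"
proof -
  have "halts_within c x n'" using assms by (rule halts_within_mono)
  then have "first_covering_trace c x n' = first_covering_trace c x n"
    using assms(1) unfolding first_covering_trace_def bounded_min_def halts_within_def by simp
  then show ?thesis unfolding output_within_def by simp
qed

lemma reval_imp_halts_within: "reval f xs y \<Longrightarrow> \<exists>n. halts_within (prog_code f) (list_encode xs) n"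
proof -
  assume "reval f xs y"
  then obtain es where es: "valid_entries es" "derives es (prog_code f) (list_encode xs) y"
    using reval_imp_derivable unfolding derivable_def by blast
  then obtain i where "i < length es" "entry_prog (es ! i) = prog_code f"
    "entry_in (es ! i) = list_encode xs"
    unfolding derives_def by (auto simp: in_set_conv_nth)
  then have "trace_covers (list_encode es) (prog_code f) (list_encode xs)"
    unfolding trace_covers_def valid_trace_list_encode using es(1) by auto
  then show ?thesis unfolding halts_within_def by auto
qed

lemma output_within_eq:
  assumes "halts_within (prog_code f) (list_encode xs) n" "reval f xs y"
  shows "output_within (prog_code f) (list_encode xs) n = y"
proof -
  define t where "t = first_covering_trace (prog_code f) (list_encode xs) n"
  have t: "trace_covers t (prog_code f) (list_encode xs)"
    using bounded_min_prop[of "Suc n" "\<lambda>t. trace_covers t (prog_code f) (list_encode xs)"] assms(1)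
    unfolding t_def first_covering_trace_def halts_within_def by blast
  define i where "i = covering_entry t (prog_code f) (list_encode xs)"
  let ?P = "\<lambda>i. entry_prog (code_nth t i) = prog_code f \<and> entry_in (code_nth t i) = list_encode xs"
  have "\<exists>i<code_length t. ?P i" using t unfolding trace_covers_def by blast
  then have i: "i < code_length t" "?P i"
    using bounded_min_prop[of "code_length t" ?P] unfolding i_def covering_entry_def by blast+
  have "reval f xs (entry_out (code_nth t i))"
    using valid_trace_sound[of t i f] t i unfolding trace_covers_def by simp
  then have "entry_out (code_nth t i) = y" using reval_functional assms(2) by blast
  then show ?thesis unfolding output_within_def Let_def t_def[symmetric] i_def[symmetric] .
qed

definition str_tl :: "nat \<Rightarrow> nat" where "str_tl c = (c - 1) div 2"

primrec str_drop :: "nat \<Rightarrow> nat \<Rightarrow> nat" where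
  "str_drop c 0 = c"
| "str_drop c (Suc i) = str_tl (str_drop c i)"

definition str_length :: "nat \<Rightarrow> nat" where
  "str_length c = (\<Sum>i<c. if str_drop c i = 0 then 0 else 1)"

definition str_take :: "nat \<Rightarrow> nat \<Rightarrow> nat" where "str_take c j = c - 2 ^ j * str_drop c j"

definition str_bit :: "nat \<Rightarrow> nat \<Rightarrow> nat" where
  "str_bit c j = (if even (str_drop c j) then 1 else 0)"

lemma computable_str_drop [computable_intros]:
  assumes "computable k A" "computable k B"
  shows "computable k (\<lambda>xs. str_drop (A xs) (B xs))"
proof -
  have "computable k (\<lambda>xs. rec_nat (A xs) (\<lambda>i acc. str_tl acc) (B xs))"
    unfolding str_tl_def by (rule computable_rec_nat; intro computable_intros assms) simp_all
  moreover have "rec_nat c (\<lambda>i acc. str_tl acc) n = str_drop c n" for c n by (induction n) auto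
  ultimately show ?thesis by simp
qed

lemma computable_str_length [computable_intros]:
  "computable k A \<Longrightarrow> computable k (\<lambda>xs. str_length (A xs))"
  unfolding str_length_def by (intro computable_intros computable_drop1) simp_all

lemma computable_str_take [computable_intros]:
  "computable k A \<Longrightarrow> computable k B \<Longrightarrow> computable k (\<lambda>xs. str_take (A xs) (B xs))"
  unfolding str_take_def by (intro computable_intros)

lemma computable_str_bit [computable_intros]:
  "computable k A \<Longrightarrow> computable k B \<Longrightarrow> computable k (\<lambda>xs. str_bit (A xs) (B xs))"
  unfolding str_bit_def by (intro computable_intros)

lemma str_tl_enc_str: "str_tl (enc_str s) = enc_str (tl s)"
  by (cases s) (auto simp: str_tl_def)

lemma str_drop_enc_str: "str_drop (enc_str s) i = enc_str (drop i s)"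
  by (induction i) (simp_all add: str_tl_enc_str drop_Suc tl_drop)

lemma enc_str_eq_0_iff [simp]: "enc_str s = 0 \<longleftrightarrow> s = []"
  by (cases s) auto

lemma length_le_enc_str: "length s \<le> enc_str s"
  by (induction s) auto

lemma str_length_enc_str [simp]: "str_length (enc_str s) = length s"
proof -
  have "str_length (enc_str s) = (\<Sum>i<enc_str s. if i < length s then 1 else (0::nat))"
    unfolding str_length_def by (intro sum.cong) (auto simp: str_drop_enc_str)
  also have "\<dots> = card {i. i < enc_str s \<and> i < length s}"
    by (simp add: sum.If_cases Int_def)
  also have "{i. i < enc_str s \<and> i < length s} = {..<length s}"
    using length_le_enc_str[of s] by auto
  finally show ?thesis by simp
qed

lemma enc_str_take_drop: "enc_str s = enc_str (take j s) + 2 ^ j * enc_str (drop j s)"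
proof (induction s arbitrary: j)
  case (Cons b s)
  show ?case
  proof (cases j)
    case (Suc j')
    then show ?thesis using Cons[of j'] by (simp add: algebra_simps)
  qed simp
qed simp

lemma str_take_enc_str [simp]: "str_take (enc_str s) j = enc_str (take j s)"
  unfolding str_take_def str_drop_enc_str using enc_str_take_drop[of s j] by simp

lemma str_bit_enc_str [simp]: "j < length s \<Longrightarrow> str_bit (enc_str s) j = enc_bit (s ! j)"
  unfolding str_bit_def str_drop_enc_str enc_bit_def by (auto simp: Cons_nth_drop_Suc[symmetric])

text \<open>A fraction code \<open>npair n d\<close> with \<open>n\<close> odd or \<open>d = 0\<close> stands for \<open>0\<close>; otherwise it stands
  for \<open>(n div 2) / d\<close>. This decodes the codes \<^const>\<open>enc_rat\<close> of nonnegative rationals correctly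
  and sends negative ones to \<open>0\<close>.\<close>

definition frac_num :: "nat \<Rightarrow> nat" where
  "frac_num y = (if odd (nfst y) \<or> nsnd y = 0 then 0 else nfst y div 2)"

definition frac_den :: "nat \<Rightarrow> nat" where
  "frac_den y = (if odd (nfst y) \<or> nsnd y = 0 then 1 else nsnd y)"

definition frac_val :: "nat \<Rightarrow> real" where
  "frac_val y = real (frac_num y) / real (frac_den y)"

definition frac_le :: "nat \<Rightarrow> nat \<Rightarrow> bool" where
  "frac_le y y' \<longleftrightarrow> frac_num y * frac_den y' \<le> frac_num y' * frac_den y"

definition frac_code :: "nat \<Rightarrow> nat \<Rightarrow> nat" where
  "frac_code n d = npair (2 * (n div gcd n d)) (d div gcd n d)"

lemma computable_frac_num [computable_intros]:
  "computable k A \<Longrightarrow> computable k (\<lambda>xs. frac_num (A xs))"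
  unfolding frac_num_def by (intro computable_intros)

lemma computable_frac_den [computable_intros]:
  "computable k A \<Longrightarrow> computable k (\<lambda>xs. frac_den (A xs))"
  unfolding frac_den_def by (intro computable_intros)

lemma decidable_frac_le [computable_intros]:
  "computable k A \<Longrightarrow> computable k B \<Longrightarrow> decidable k (\<lambda>xs. frac_le (A xs) (B xs))"
  unfolding frac_le_def by (intro computable_intros)

lemma computable_frac_code [computable_intros]:
  "computable k A \<Longrightarrow> computable k B \<Longrightarrow> computable k (\<lambda>xs. frac_code (A xs) (B xs))"
  unfolding frac_code_def by (intro computable_intros)

lemma frac_val_0 [simp]: "frac_val 0 = 0"
  by (simp add: frac_val_def frac_num_def)

lemma frac_den_pos: "0 < frac_den y"
  by (simp add: frac_den_def)

lemma frac_val_nonneg: "0 \<le> frac_val y"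
  by (simp add: frac_val_def)

lemma frac_le_iff: "frac_le y y' \<longleftrightarrow> frac_val y \<le> frac_val y'"
proof -
  have d: "0 < real (frac_den y)" "0 < real (frac_den y')" using frac_den_pos by auto
  have "frac_val y \<le> frac_val y' \<longleftrightarrow>
      real (frac_num y) * real (frac_den y') \<le> real (frac_num y') * real (frac_den y)"
    unfolding frac_val_def using d by (simp add: divide_le_eq le_divide_eq field_simps)
  also have "\<dots> \<longleftrightarrow> frac_le y y'" unfolding frac_le_def by (simp flip: of_nat_mult)
  finally show ?thesis by simp
qed

lemma frac_val_enc_rat: "frac_val (enc_rat q) = max (real_of_rat q) 0"
proof -
  obtain p d where qd: "quotient_of q = (p, d)" by (cases "quotient_of q")
  have d: "0 < d" using quotient_of_denom_pos[OF qd] .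
  have q: "real_of_rat q = of_int p / of_int d"
    using quotient_of_div[OF qd] by (simp add: of_rat_divide)
  have e: "enc_rat q = npair (enc_int p) (nat d)" by (simp add: enc_rat_def qd npair_def)
  show ?thesis
  proof (cases "0 \<le> p")
    case True
    then have "frac_val (enc_rat q) = real (nat p) / real (nat d)"
      using d by (simp add: e frac_val_def frac_num_def frac_den_def enc_int_def)
    then show ?thesis using True d q by simp
  next
    case False
    then have "frac_val (enc_rat q) = 0" by (simp add: e frac_val_def frac_num_def enc_int_def)
    moreover have "real_of_rat q < 0" using False d q by (simp add: divide_neg_pos)
    ultimately show ?thesis by simp
  qed
qed

lemma frac_code_eq_enc_rat: "0 < d \<Longrightarrow> frac_code n d = enc_rat (of_nat n / of_nat d)"
proof -
  assume d: "0 < d"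
  define g where "g = gcd n d"
  have g: "0 < g" using d by (simp add: g_def)
  define p q where "p = int (n div g)" and "q = int (d div g)"
  have "coprime p q"
    using div_gcd_coprime[of n d] d by (simp add: p_def q_def g_def coprime_int_iff)
  moreover have "0 < q" using d g by (simp add: q_def g_def dvd_imp_le div_greater_zero_iff)
  moreover have "(of_nat n / of_nat d :: rat) = Fract p q"
  proof -
    have "n = (n div g) * g" "d = (d div g) * g" by (simp_all add: g_def)
    then have "(of_nat n / of_nat d :: rat) = of_int p / of_int q"
      using g unfolding p_def q_def by (metis (no_types, lifting) of_int_of_nat_eq of_nat_mult
          mult_divide_mult_cancel_right of_nat_0_less_iff not_less0 of_nat_eq_0_iff order_less_irrefl)
    then show ?thesis by (simp add: Fract_of_int_quotient)
  qed
  ultimately have "quotient_of (of_nat n / of_nat d :: rat) = (p, q)"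
    by (simp add: quotient_of_Fract Rat.normalize_def)
  then show ?thesis by (simp add: enc_rat_def frac_code_def p_def q_def g_def npair_def enc_int_def)
qed

lemma affine_le_one_between:
  fixes p a b y1 y0 :: real
  assumes "a \<le> p" "p \<le> b" "a * y1 + (1 - a) * y0 \<le> 1" "b * y1 + (1 - b) * y0 \<le> 1"
  shows "p * y1 + (1 - p) * y0 \<le> 1"
proof (cases "y0 \<le> y1")
  case True
  have "p * y1 + (1 - p) * y0 = y0 + p * (y1 - y0)" by (simp add: algebra_simps)
  also have "\<dots> \<le> y0 + b * (y1 - y0)" using True assms(2) by (intro add_left_mono mult_right_mono) auto
  also have "\<dots> = b * y1 + (1 - b) * y0" by (simp add: algebra_simps)
  finally show ?thesis using assms(4) by simp
next
  case False
  have "p * y1 + (1 - p) * y0 = y0 + p * (y1 - y0)" by (simp add: algebra_simps)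
  also have "\<dots> \<le> y0 + a * (y1 - y0)"
    using False assms(1) by (intro add_left_mono mult_right_mono_neg) auto
  also have "\<dots> = a * y1 + (1 - a) * y0" by (simp add: algebra_simps)
  finally show ?thesis using assms(3) by simp
qed

lemma affine_le_one_iff_nat:
  fixes p q n1 d1 n0 d0 :: nat
  assumes "0 < q" "p \<le> q" "0 < d1" "0 < d0"
  shows "p * n1 * d0 + (q - p) * n0 * d1 \<le> q * d1 * d0 \<longleftrightarrow>
    (real p / real q) * (real n1 / real d1) + (1 - real p / real q) * (real n0 / real d0) \<le> 1"
proof -
  have pos: "0 < real q * real d1 * real d0" using assms by simp
  have "((real p / real q) * (real n1 / real d1) + (1 - real p / real q) * (real n0 / real d0))
      * (real q * real d1 * real d0) = real p * real n1 * real d0 + real (q - p) * real n0 * real d1"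
    using assms by (simp add: of_nat_diff field_simps)
  then have "(real p / real q) * (real n1 / real d1) + (1 - real p / real q) * (real n0 / real d0) \<le> 1
      \<longleftrightarrow> real p * real n1 * real d0 + real (q - p) * real n0 * real d1 \<le> real q * real d1 * real d0"
    using pos by (metis mult_le_cancel_right_pos mult_1)
  also have "\<dots> \<longleftrightarrow> p * n1 * d0 + (q - p) * n0 * d1 \<le> q * d1 * d0"
    by (simp flip: of_nat_mult of_nat_add)
  finally show ?thesis by simp
qed

lemma le_upper_exp:
  assumes "p \<in> {a..b}" "0 \<le> a" "b \<le> 1"
  shows "p * f True + (1 - p) * f False \<le> upper_exp {a..b} f"
  unfolding upper_exp_def
proof (rule cSUP_upper[OF assms(1)])
  have "q * f True + (1 - q) * f False \<le> \<bar>f True\<bar> + \<bar>f False\<bar>" if "q \<in> {a..b}" for q :: real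
  proof -
    have q: "0 \<le> q" "q \<le> 1" using that assms by auto
    have "q * f True \<le> q * \<bar>f True\<bar>" using q by (intro mult_left_mono) auto
    also have "\<dots> \<le> \<bar>f True\<bar>" using q by (intro mult_left_le_one_le) auto
    finally have "q * f True \<le> \<bar>f True\<bar>" .
    moreover have "(1 - q) * f False \<le> (1 - q) * \<bar>f False\<bar>" using q by (intro mult_left_mono) auto
    moreover have "\<dots> \<le> \<bar>f False\<bar>" using q by (intro mult_left_le_one_le) auto
    ultimately show ?thesis by linarith
  qed
  then show "bdd_above ((\<lambda>p. p * f True + (1 - p) * f False) ` {a..b})"
    by (intro bdd_aboveI2)
qed

lemma mult_gen_Nil [simp]: "mult_gen D [] = 1"
  by (simp add: mult_gen_def)

lemma mult_gen_snoc: "mult_gen D (s @ [x]) = mult_gen D s * D s x"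
proof -
  have "mult_gen D (s @ [x]) = (\<Prod>k<length s. D (take k (s @ [x])) ((s @ [x]) ! k)) * D s x"
    unfolding mult_gen_def by (simp add: prod.lessThan_Suc)
  also have "(\<Prod>k<length s. D (take k (s @ [x])) ((s @ [x]) ! k)) = mult_gen D s"
    unfolding mult_gen_def by (intro prod.cong) (auto simp: nth_append)
  finally show ?thesis .
qed

lemma mult_gen_nonneg: "(\<And>s x. 0 \<le> D s x) \<Longrightarrow> 0 \<le> mult_gen D s"
  unfolding mult_gen_def by (simp add: prod_nonneg)

lemma mult_gen_mono:
  "(\<And>s x. 0 \<le> D s x) \<Longrightarrow> (\<And>s x. D s x \<le> D' s x) \<Longrightarrow> mult_gen D s \<le> mult_gen D' s"
  unfolding mult_gen_def by (simp add: prod_mono)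

lemma mult_gen_prefix: "mult_gen D (prefix \<omega> n) = (\<Prod>j<n. D (prefix \<omega> j) (\<omega> j))"
  unfolding mult_gen_def prefix_def by (intro prod.cong) (auto simp: take_map)

lemma prefix_Suc: "prefix \<omega> (Suc n) = prefix \<omega> n @ [\<omega> n]"
  by (simp add: prefix_def)

lemma mult_gen_supermartingale_nonneg:
  assumes "test_supermartingale I (mult_gen D)" "0 < mult_gen D s"
  shows "0 \<le> D s x"
proof -
  have "0 \<le> mult_gen D (s @ [x])" using assms(1) by (simp add: test_supermartingale_def)
  then show ?thesis using assms(2) by (simp add: mult_gen_snoc zero_le_mult_iff)
qed

lemma mult_gen_supermartingale_le_one:
  assumes "test_supermartingale {a..b} (mult_gen D)" "0 \<le> a" "b \<le> 1"
    and "0 < mult_gen D s" "p \<in> {a..b}"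
  shows "p * D s True + (1 - p) * D s False \<le> 1"
proof -
  let ?M = "mult_gen D"
  have "p * (?M (s @ [True]) - ?M s) + (1 - p) * (?M (s @ [False]) - ?M s)
      \<le> upper_exp {a..b} (\<lambda>x. ?M (s @ [x]) - ?M s)"
    by (rule le_upper_exp[OF assms(5,2,3)])
  also have "\<dots> \<le> 0" using assms(1) unfolding test_supermartingale_def by blast
  finally have "?M s * (p * D s True + (1 - p) * D s False - 1) \<le> 0"
    by (simp add: mult_gen_snoc algebra_simps)
  then show ?thesis using assms(4) by (simp add: mult_le_0_iff)
qed

lemma mult_gen_prefix_pos:
  assumes "\<And>s. 0 \<le> mult_gen D s" "limsup (\<lambda>n. ereal (mult_gen D (prefix \<omega> n))) = \<infinity>"
  shows "0 < mult_gen D (prefix \<omega> n)"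
proof (rule ccontr)
  assume "\<not> 0 < mult_gen D (prefix \<omega> n)"
  then have zero: "mult_gen D (prefix \<omega> n) = 0" using assms(1)[of "prefix \<omega> n"] by linarith
  have "mult_gen D (prefix \<omega> m) = 0" if "n \<le> m" for m
    using that by (induction m rule: dec_induct) (simp_all add: zero prefix_Suc mult_gen_snoc)
  then have "eventually (\<lambda>m. ereal (mult_gen D (prefix \<omega> m)) \<le> 0) sequentially"
    unfolding eventually_sequentially by (intro exI[of _ n]) simp
  then have "limsup (\<lambda>m. ereal (mult_gen D (prefix \<omega> m))) \<le> 0" by (rule Limsup_bounded)
  then show False using assms(2) by simp
qed

lemma limsup_infinity_dominated:
  fixes f g :: "nat \<Rightarrow> real"
  assumes "0 < c" "\<And>n. c * f n \<le> g n" "limsup (\<lambda>n. ereal (f n)) = \<infinity>"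
  shows "limsup (\<lambda>n. ereal (g n)) = \<infinity>"
proof -
  have "limsup (\<lambda>n. ereal c * ereal (f n)) = ereal c * \<infinity>"
    using limsup_ereal_mult_left[of c "\<lambda>n. ereal (f n)"] assms(1,3) by simp
  then have "limsup (\<lambda>n. ereal c * ereal (f n)) = \<infinity>" using assms(1) by simp
  moreover have "limsup (\<lambda>n. ereal c * ereal (f n)) \<le> limsup (\<lambda>n. ereal (g n))"
    by (rule Limsup_mono) (use assms(2) in auto)
  ultimately show ?thesis by (simp add: top_unique)
qed

lemma suminf_affine_le:
  fixes p :: real
  assumes "summable f" "summable g" "summable h" "\<And>k. p * f k + (1 - p) * g k \<le> h k"
  shows "p * suminf f + (1 - p) * suminf g \<le> suminf h"
proof -
  have "p * suminf f + (1 - p) * suminf g = (\<Sum>k. p * f k) + (\<Sum>k. (1 - p) * g k)"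
    using assms(1,2) by (simp add: suminf_mult)
  also have "\<dots> = (\<Sum>k. p * f k + (1 - p) * g k)"
    by (rule suminf_add) (intro summable_mult assms)+
  also have "\<dots> \<le> suminf h"
    using assms by (intro suminf_le summable_add summable_mult)
  finally show ?thesis .
qed

section \<open>Trimming the approximations computed by a program\<close>

text \<open>A program \<open>k\<close> is read as computing the \<open>m\<close>-th approximation of a multiplier at the string
  coded by \<open>sc\<close> and the outcome \<open>x\<close> from the input \<open>[sc, x, m]\<close>.\<close>

definition approx_input :: "nat \<Rightarrow> nat \<Rightarrow> nat \<Rightarrow> nat" where
  "approx_input sc x m = code_cons sc (code_cons x (code_cons m 0))"

definition approx_out :: "nat \<Rightarrow> nat \<Rightarrow> nat \<Rightarrow> nat \<Rightarrow> nat \<Rightarrow> nat" where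
  "approx_out k sc x m n = output_within k (approx_input sc x m) n"

definition approx_halted :: "nat \<Rightarrow> nat \<Rightarrow> nat \<Rightarrow> nat \<Rightarrow> bool" where
  "approx_halted k sc m n \<longleftrightarrow>
    halts_within k (approx_input sc 1 m) n \<and> halts_within k (approx_input sc 0 m) n"

lemma approx_input_eq: "approx_input sc x m = list_encode [sc, x, m]"
  by (simp add: approx_input_def code_cons_list_encode[symmetric])

lemma computable_approx_out [computable_intros]:
  "computable k A \<Longrightarrow> computable k B \<Longrightarrow> computable k C \<Longrightarrow> computable k D \<Longrightarrow> computable k E \<Longrightarrow>
    computable k (\<lambda>xs. approx_out (A xs) (B xs) (C xs) (D xs) (E xs))"
  unfolding approx_out_def approx_input_def by (intro computable_intros)

lemma decidable_approx_halted [computable_intros]: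
  "computable k A \<Longrightarrow> computable k B \<Longrightarrow> computable k C \<Longrightarrow> computable k D \<Longrightarrow>
    decidable k (\<lambda>xs. approx_halted (A xs) (B xs) (C xs) (D xs))"
  unfolding approx_halted_def approx_input_def by (intro computable_intros)

lemma approx_halted_mono: "approx_halted k sc m n \<Longrightarrow> n \<le> n' \<Longrightarrow> approx_halted k sc m n'"
  unfolding approx_halted_def using halts_within_mono by blast

lemma approx_out_stable:
  "approx_halted k sc m n \<Longrightarrow> x \<in> {0, 1} \<Longrightarrow> n \<le> n' \<Longrightarrow> approx_out k sc x m n' = approx_out k sc x m n"
  unfolding approx_halted_def approx_out_def using output_within_stable by auto

text \<open>The endpoints \<open>lo = pa / qa\<close> and \<open>hi = pb / qb\<close> are given by natural numbers so that the
  admissibility test below is computable.\<close>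

locale rational_interval =
  fixes pa qa pb qb :: nat
  assumes qa_pos: "0 < qa" and qb_pos: "0 < qb"
    and lo_pos: "0 < real pa / real qa"
    and lo_le_hi: "real pa / real qa \<le> real pb / real qb"
    and hi_less_1: "real pb / real qb < 1"
begin

definition lo :: real where "lo = real pa / real qa"
definition hi :: real where "hi = real pb / real qb"

lemma lo_hi: "0 < lo" "lo \<le> hi" "hi < 1"
  using lo_pos lo_le_hi hi_less_1 by (simp_all add: lo_def hi_def)

definition admissible :: "nat \<Rightarrow> nat \<Rightarrow> bool" where
  "admissible y1 y0 \<longleftrightarrow>
    pa * frac_num y1 * frac_den y0 + (qa - pa) * frac_num y0 * frac_den y1 \<le> qa * frac_den y1 * frac_den y0 \<and>
    pb * frac_num y1 * frac_den y0 + (qb - pb) * frac_num y0 * frac_den y1 \<le> qb * frac_den y1 * frac_den y0"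

lemma admissible_iff:
  "admissible y1 y0 \<longleftrightarrow>
    lo * frac_val y1 + (1 - lo) * frac_val y0 \<le> 1 \<and> hi * frac_val y1 + (1 - hi) * frac_val y0 \<le> 1"
proof -
  have "lo < 1" "hi < 1" using lo_hi by simp_all
  then have "pa \<le> qa" "pb \<le> qb"
    using qa_pos qb_pos by (simp_all add: lo_def hi_def divide_less_eq)
  then show ?thesis
    unfolding admissible_def lo_def hi_def frac_val_def
    using affine_le_one_iff_nat[OF qa_pos _ frac_den_pos frac_den_pos]
      affine_le_one_iff_nat[OF qb_pos _ frac_den_pos frac_den_pos]
    by simp
qed

definition good_upto :: "nat \<Rightarrow> nat \<Rightarrow> nat \<Rightarrow> nat \<Rightarrow> bool" where
  "good_upto k sc m n \<longleftrightarrow> (\<forall>m'<Suc m. approx_halted k sc m' n \<and>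
      admissible (approx_out k sc 1 m' n) (approx_out k sc 0 m' n) \<and>
      (0 < m' \<longrightarrow> frac_le (approx_out k sc 1 (m' - 1) n) (approx_out k sc 1 m' n) \<and>
                  frac_le (approx_out k sc 0 (m' - 1) n) (approx_out k sc 0 m' n)))"

text \<open>Since \<^const>\<open>good_upto\<close> is downward closed in \<open>m\<close>, this is the length of the good initial
  run of approximations (capped at \<open>n\<close>).\<close>

definition good_count :: "nat \<Rightarrow> nat \<Rightarrow> nat \<Rightarrow> nat" where
  "good_count k sc n = (\<Sum>m<n. if good_upto k sc m n then 1 else 0)"

definition trimmed_code :: "nat \<Rightarrow> nat \<Rightarrow> nat \<Rightarrow> nat \<Rightarrow> nat" where
  "trimmed_code k sc x n = (if good_count k sc n = 0 then 0 else approx_out k sc x (good_count k sc n - 1) n)"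

definition trimmed_mult :: "nat \<Rightarrow> nat \<Rightarrow> bool list \<Rightarrow> bool \<Rightarrow> real" where
  "trimmed_mult k n s x = frac_val (trimmed_code k (enc_str s) (enc_bit x) n)"

definition limit_mult :: "nat \<Rightarrow> bool list \<Rightarrow> bool \<Rightarrow> real" where
  "limit_mult k s x = (SUP n. trimmed_mult k n s x)"

definition weight :: "nat \<Rightarrow> real" where
  "weight k = (1 / 2) ^ Suc k"

definition universal_test :: "bool list \<Rightarrow> real" where
  "universal_test s = (\<Sum>k. weight k * mult_gen (limit_mult k) s)"

definition universal_approx :: "bool list \<Rightarrow> nat \<Rightarrow> real" where
  "universal_approx s n = (\<Sum>k<n. weight k * mult_gen (trimmed_mult k n) s)"

definition trimmed_num :: "nat \<Rightarrow> nat \<Rightarrow> nat \<Rightarrow> nat" where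
  "trimmed_num k sc n = (\<Prod>j<str_length sc. frac_num (trimmed_code k (str_take sc j) (str_bit sc j) n))"

definition trimmed_den :: "nat \<Rightarrow> nat \<Rightarrow> nat \<Rightarrow> nat" where
  "trimmed_den k sc n = (\<Prod>j<str_length sc. frac_den (trimmed_code k (str_take sc j) (str_bit sc j) n))"

definition approx_den :: "nat \<Rightarrow> nat \<Rightarrow> nat" where
  "approx_den sc n = (\<Prod>k<n. trimmed_den k sc n * 2 ^ Suc k)"

definition approx_num :: "nat \<Rightarrow> nat \<Rightarrow> nat" where
  "approx_num sc n = (\<Sum>k<n. trimmed_num k sc n * (approx_den sc n div (trimmed_den k sc n * 2 ^ Suc k)))"

lemma decidable_admissible [computable_intros]:
  "computable k A \<Longrightarrow> computable k B \<Longrightarrow> decidable k (\<lambda>xs. admissible (A xs) (B xs))"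
  unfolding admissible_def by (intro computable_intros)

lemma decidable_good_upto [computable_intros]:
  assumes "computable k A" "computable k B" "computable k C" "computable k D"
  shows "decidable k (\<lambda>xs. good_upto (A xs) (B xs) (C xs) (D xs))"
proof -
  have "decidable 4 (\<lambda>xs. good_upto (xs ! 0) (xs ! 1) (xs ! 2) (xs ! 3))"
    unfolding good_upto_def by (intro computable_intros) simp_all
  from decidable_lift4[OF this assms] show ?thesis .
qed

lemma computable_trimmed_code [computable_intros]:
  assumes "computable k A" "computable k B" "computable k C" "computable k D"
  shows "computable k (\<lambda>xs. trimmed_code (A xs) (B xs) (C xs) (D xs))"
proof -
  have count: "computable 3 (\<lambda>xs. good_count (xs ! 0) (xs ! 1) (xs ! 2))"
    unfolding good_count_def by (intro computable_intros) simp_all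
  show ?thesis
    unfolding trimmed_code_def by (intro computable_intros computable_lift3[OF count] assms)
qed

lemma computable_approx_code:
  "computable 2 (\<lambda>xs. frac_code (approx_num (xs ! 0) (xs ! 1)) (approx_den (xs ! 0) (xs ! 1)))"
proof -
  have "computable 3 (\<lambda>xs. trimmed_num (xs ! 0) (xs ! 1) (xs ! 2))"
    "computable 3 (\<lambda>xs. trimmed_den (xs ! 0) (xs ! 1) (xs ! 2))"
    unfolding trimmed_num_def trimmed_den_def by (intro computable_intros; simp)+
  note trimmed = computable_lift3[OF this(1)] computable_lift3[OF this(2)]
  have "computable 2 (\<lambda>xs. approx_den (xs ! 0) (xs ! 1))"
    unfolding approx_den_def by (intro computable_intros trimmed) simp_all
  note den = computable_lift2[OF this]
  have num: "computable 2 (\<lambda>xs. approx_num (xs ! 0) (xs ! 1))"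
    unfolding approx_num_def by (intro computable_intros trimmed den) simp_all
  show ?thesis by (intro computable_intros computable_lift2[OF num] den) simp_all
qed

lemma good_upto_downward: "good_upto k sc m n \<Longrightarrow> m' \<le> m \<Longrightarrow> good_upto k sc m' n"
  unfolding good_upto_def by auto

lemma good_upto_approx_halted: "good_upto k sc m n \<Longrightarrow> m' \<le> m \<Longrightarrow> approx_halted k sc m' n"
  unfolding good_upto_def by auto

lemma good_upto_mono:
  assumes good: "good_upto k sc m n" and "n \<le> n'"
  shows "good_upto k sc m n'"
proof -
  have stable: "approx_out k sc x m' n' = approx_out k sc x m' n" if "m' \<le> m" "x \<in> {0, 1}" for m' x
    using approx_out_stable[OF good_upto_approx_halted[OF good that(1)] that(2) \<open>n \<le> n'\<close>] .
  show ?thesis unfolding good_upto_def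
  proof (intro allI impI)
    fix m' assume m': "m' < Suc m"
    have "approx_halted k sc m' n'"
      using approx_halted_mono[OF good_upto_approx_halted[OF good] \<open>n \<le> n'\<close>] m' by simp
    moreover have "admissible (approx_out k sc 1 m' n') (approx_out k sc 0 m' n') \<and>
      (0 < m' \<longrightarrow> frac_le (approx_out k sc 1 (m' - 1) n') (approx_out k sc 1 m' n') \<and>
                  frac_le (approx_out k sc 0 (m' - 1) n') (approx_out k sc 0 m' n'))"
      using good m' stable[of m' 1] stable[of m' 0] stable[of "m' - 1" 1] stable[of "m' - 1" 0]
      unfolding good_upto_def by auto
    ultimately show "approx_halted k sc m' n' \<and>
      admissible (approx_out k sc 1 m' n') (approx_out k sc 0 m' n') \<and>
      (0 < m' \<longrightarrow> frac_le (approx_out k sc 1 (m' - 1) n') (approx_out k sc 1 m' n') \<and>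
                  frac_le (approx_out k sc 0 (m' - 1) n') (approx_out k sc 0 m' n'))"
      by blast
  qed
qed

lemma good_count_eq_card: "good_count k sc n = card {m. m < n \<and> good_upto k sc m n}"
  unfolding good_count_def by (simp add: sum.If_cases Int_def)

lemma good_upto_iff_less_good_count: "m < n \<Longrightarrow> good_upto k sc m n \<longleftrightarrow> m < good_count k sc n"
proof
  assume "m < n" "good_upto k sc m n"
  then have "{..m} \<subseteq> {m. m < n \<and> good_upto k sc m n}" using good_upto_downward by auto
  then have "card {..m} \<le> good_count k sc n" unfolding good_count_eq_card by (rule card_mono[rotated]) simp
  then show "m < good_count k sc n" by simp
next
  assume m: "m < good_count k sc n"
  show "good_upto k sc m n"
  proof (rule ccontr)
    assume bad: "\<not> good_upto k sc m n"
    have "{m. m < n \<and> good_upto k sc m n} \<subseteq> {..<m}"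
    proof
      fix m' assume "m' \<in> {m. m < n \<and> good_upto k sc m n}"
      then show "m' \<in> {..<m}" using bad good_upto_downward[of k sc m' n m] by (cases "m \<le> m'") auto
    qed
    then have "good_count k sc n \<le> m" unfolding good_count_eq_card
      by (metis card_lessThan card_mono finite_lessThan)
    then show False using m by simp
  qed
qed

lemma good_count_le: "good_count k sc n \<le> n"
proof -
  have "card {m. m < n \<and> good_upto k sc m n} \<le> card {..<n}" by (intro card_mono) auto
  then show ?thesis by (simp add: good_count_eq_card)
qed

lemma good_upto_good_count: "0 < good_count k sc n \<Longrightarrow> good_upto k sc (good_count k sc n - 1) n"
  using good_upto_iff_less_good_count[of "good_count k sc n - 1" n] good_count_le[of k sc n] by simp

lemma good_count_mono: "n \<le> n' \<Longrightarrow> good_count k sc n \<le> good_count k sc n'"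
proof (cases "good_count k sc n = 0")
  case False
  assume "n \<le> n'"
  have "good_upto k sc (good_count k sc n - 1) n'"
    using good_upto_mono[OF good_upto_good_count \<open>n \<le> n'\<close>] False by simp
  moreover have "good_count k sc n - 1 < n'" using good_count_le[of k sc n] False \<open>n \<le> n'\<close> by simp
  ultimately have "good_count k sc n - 1 < good_count k sc n'"
    using good_upto_iff_less_good_count by blast
  then show ?thesis by simp
qed simp

lemma good_upto_frac_val_mono:
  assumes "good_upto k sc M n" "x \<in> {0, 1}" "m1 \<le> m2" "m2 \<le> M"
  shows "frac_val (approx_out k sc x m1 n) \<le> frac_val (approx_out k sc x m2 n)"
  using assms(3,4)
proof (induction m2 rule: dec_induct)
  case (step m2)
  have "frac_le (approx_out k sc x m2 n) (approx_out k sc x (Suc m2) n)"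
    using assms(1,2) step.prems unfolding good_upto_def by (auto dest!: spec[of _ "Suc m2"])
  then show ?case using step by (simp add: frac_le_iff)
qed simp

lemma enc_bit_cases: "enc_bit x \<in> {0, 1}"
  by (simp add: enc_bit_def)

lemma trimmed_mult_nonneg: "0 \<le> trimmed_mult k n s x"
  by (simp add: trimmed_mult_def frac_val_nonneg)

lemma trimmed_mult_mono: "n \<le> n' \<Longrightarrow> trimmed_mult k n s x \<le> trimmed_mult k n' s x"
proof (cases "good_count k (enc_str s) n = 0")
  case True
  then have "trimmed_mult k n s x = 0" by (simp add: trimmed_mult_def trimmed_code_def)
  then show ?thesis using trimmed_mult_nonneg by simp
next
  case False
  assume "n \<le> n'"
  let ?sc = "enc_str s" and ?x = "enc_bit x"
  let ?M = "good_count k ?sc n" and ?M' = "good_count k ?sc n'"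
  have MM: "?M \<le> ?M'" using \<open>n \<le> n'\<close> by (rule good_count_mono)
  have good: "good_upto k ?sc (?M - 1) n" "good_upto k ?sc (?M' - 1) n'"
    using good_upto_good_count False MM by auto
  have "trimmed_mult k n s x = frac_val (approx_out k ?sc ?x (?M - 1) n)"
    using False by (simp add: trimmed_mult_def trimmed_code_def)
  also have "\<dots> = frac_val (approx_out k ?sc ?x (?M - 1) n')"
    using approx_out_stable[OF good_upto_approx_halted[OF good(1) order.refl] enc_bit_cases \<open>n \<le> n'\<close>]
    by simp
  also have "\<dots> \<le> frac_val (approx_out k ?sc ?x (?M' - 1) n')"
    using MM by (intro good_upto_frac_val_mono[OF good(2) enc_bit_cases]) auto
  also have "\<dots> = trimmed_mult k n' s x"
    using False MM by (simp add: trimmed_mult_def trimmed_code_def)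
  finally show ?thesis .
qed

lemma trimmed_mult_endpoints:
  "lo * trimmed_mult k n s True + (1 - lo) * trimmed_mult k n s False \<le> 1"
  "hi * trimmed_mult k n s True + (1 - hi) * trimmed_mult k n s False \<le> 1"
proof -
  let ?sc = "enc_str s" and ?M = "good_count k (enc_str s) n"
  have "admissible (trimmed_code k ?sc 1 n) (trimmed_code k ?sc 0 n)"
  proof (cases "?M = 0")
    case False
    then show ?thesis using good_upto_good_count[of k ?sc n]
      unfolding good_upto_def trimmed_code_def by auto
  qed (simp add: trimmed_code_def admissible_def frac_num_def)
  then show "lo * trimmed_mult k n s True + (1 - lo) * trimmed_mult k n s False \<le> 1"
    "hi * trimmed_mult k n s True + (1 - hi) * trimmed_mult k n s False \<le> 1"
    by (simp_all add: admissible_iff trimmed_mult_def enc_bit_def)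
qed

definition mult_bound :: real where
  "mult_bound = max (1 / lo) (1 / (1 - hi))"

lemma trimmed_mult_le_bound: "trimmed_mult k n s x \<le> mult_bound"
proof -
  have nonneg: "0 \<le> trimmed_mult k n s True" "0 \<le> trimmed_mult k n s False"
    by (simp_all add: trimmed_mult_nonneg)
  have "lo * trimmed_mult k n s True \<le> 1"
    using trimmed_mult_endpoints(1)[of k n s] nonneg lo_hi by (smt (verit) mult_nonneg_nonneg)
  then have "trimmed_mult k n s True \<le> 1 / lo" using lo_hi by (simp add: le_divide_eq mult.commute)
  moreover have "(1 - hi) * trimmed_mult k n s False \<le> 1"
    using trimmed_mult_endpoints(2)[of k n s] nonneg lo_hi by (smt (verit) mult_nonneg_nonneg)
  then have "trimmed_mult k n s False \<le> 1 / (1 - hi)" using lo_hi by (simp add: le_divide_eq mult.commute)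
  ultimately show ?thesis by (cases x) (auto simp: mult_bound_def)
qed

lemma trimmed_mult_bdd: "bdd_above (range (\<lambda>n. trimmed_mult k n s x))"
  using trimmed_mult_le_bound by (intro bdd_aboveI2)

lemma trimmed_mult_tendsto: "(\<lambda>n. trimmed_mult k n s x) \<longlonglongrightarrow> limit_mult k s x"
  unfolding limit_mult_def
  by (rule LIMSEQ_incseq_SUP[OF trimmed_mult_bdd]) (simp add: incseq_def trimmed_mult_mono)

lemma trimmed_mult_le_limit: "trimmed_mult k n s x \<le> limit_mult k s x"
  unfolding limit_mult_def by (rule cSUP_upper[OF _ trimmed_mult_bdd]) simp

lemma limit_mult_nonneg: "0 \<le> limit_mult k s x"
  using trimmed_mult_le_limit[of k 0 s x] trimmed_mult_nonneg[of k 0 s x] by simp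

lemma limit_mult_le_bound: "limit_mult k s x \<le> mult_bound"
  unfolding limit_mult_def by (rule cSUP_least) (auto simp: trimmed_mult_le_bound)

lemma limit_mult_le_one:
  assumes "p \<in> {lo..hi}"
  shows "p * limit_mult k s True + (1 - p) * limit_mult k s False \<le> 1"
proof (rule LIMSEQ_le_const2)
  show "(\<lambda>n. p * trimmed_mult k n s True + (1 - p) * trimmed_mult k n s False) \<longlonglongrightarrow>
      p * limit_mult k s True + (1 - p) * limit_mult k s False"
    by (intro tendsto_intros trimmed_mult_tendsto)
  show "\<exists>N. \<forall>n\<ge>N. p * trimmed_mult k n s True + (1 - p) * trimmed_mult k n s False \<le> 1"
    using affine_le_one_between[of lo p hi] assms trimmed_mult_endpoints by auto
qed

section \<open>The universal test supermartingale\<close>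

lemma weight_pos: "0 < weight k"
  by (simp add: weight_def)

lemma weight_sums: "weight sums 1"
  unfolding weight_def by (rule power_half_series)

lemma mult_gen_limit_mult_le: "mult_gen (limit_mult k) s \<le> mult_bound ^ length s"
proof -
  have "mult_gen (limit_mult k) s \<le> (\<Prod>j<length s. mult_bound)"
    unfolding mult_gen_def by (intro prod_mono) (simp add: limit_mult_nonneg limit_mult_le_bound)
  then show ?thesis by simp
qed

lemma summable_universal_test: "summable (\<lambda>k. weight k * mult_gen (limit_mult k) s)"
proof (rule summable_comparison_test)
  have "norm (weight k * mult_gen (limit_mult k) s) \<le> mult_bound ^ length s * weight k" for k
  proof -
    have "norm (weight k * mult_gen (limit_mult k) s) = weight k * mult_gen (limit_mult k) s"
      using weight_pos[of k] by (simp add: mult_gen_nonneg limit_mult_nonneg)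
    also have "\<dots> \<le> weight k * mult_bound ^ length s"
      using weight_pos[of k] mult_gen_limit_mult_le by (simp add: mult_left_mono)
    finally show ?thesis by (simp add: mult.commute)
  qed
  then show "\<exists>N. \<forall>k\<ge>N. norm (weight k * mult_gen (limit_mult k) s) \<le> mult_bound ^ length s * weight k"
    by blast
  show "summable (\<lambda>k. mult_bound ^ length s * weight k)"
    using weight_sums by (intro summable_mult sums_summable)
qed

lemma weight_le_universal_test: "weight k * mult_gen (limit_mult k) s \<le> universal_test s"
  unfolding universal_test_def
  using sum_le_suminf[OF summable_universal_test, of "{k}"] weight_pos
  by (simp add: less_imp_le mult_gen_nonneg limit_mult_nonneg)

lemma universal_test_Nil: "universal_test [] = 1"
  using weight_sums by (simp add: universal_test_def sums_iff)

lemma universal_test_nonneg: "0 \<le> universal_test s"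
  unfolding universal_test_def using weight_pos
  by (intro suminf_nonneg summable_universal_test) (simp add: less_imp_le mult_gen_nonneg limit_mult_nonneg)

lemma universal_test_step:
  assumes "p \<in> {lo..hi}"
  shows "p * universal_test (s @ [True]) + (1 - p) * universal_test (s @ [False]) \<le> universal_test s"
  unfolding universal_test_def
proof (rule suminf_affine_le[OF summable_universal_test summable_universal_test summable_universal_test])
  fix k
  have "p * (weight k * mult_gen (limit_mult k) (s @ [True])) +
      (1 - p) * (weight k * mult_gen (limit_mult k) (s @ [False]))
      = weight k * mult_gen (limit_mult k) s * (p * limit_mult k s True + (1 - p) * limit_mult k s False)"
    by (simp add: mult_gen_snoc algebra_simps)
  also have "\<dots> \<le> weight k * mult_gen (limit_mult k) s"
    using limit_mult_le_one[OF assms] weight_pos[of k]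
    by (intro mult_left_le) (simp_all add: mult_gen_nonneg limit_mult_nonneg)
  finally show "p * (weight k * mult_gen (limit_mult k) (s @ [True])) +
      (1 - p) * (weight k * mult_gen (limit_mult k) (s @ [False])) \<le> weight k * mult_gen (limit_mult k) s" .
qed

lemma test_supermartingale_universal_test: "test_supermartingale {lo..hi} universal_test"
  unfolding test_supermartingale_def
proof (intro conjI allI)
  fix s
  show "upper_exp {lo..hi} (\<lambda>x. universal_test (s @ [x]) - universal_test s) \<le> 0"
    unfolding upper_exp_def using lo_hi universal_test_step
    by (intro cSUP_least) (auto simp: algebra_simps)
qed (simp_all add: universal_test_Nil universal_test_nonneg)

lemma universal_approx_mono: "n \<le> n' \<Longrightarrow> universal_approx s n \<le> universal_approx s n'"
proof -
  assume "n \<le> n'"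
  have "universal_approx s n \<le> (\<Sum>k<n. weight k * mult_gen (trimmed_mult k n') s)"
    unfolding universal_approx_def using weight_pos \<open>n \<le> n'\<close>
    by (intro sum_mono mult_left_mono mult_gen_mono)
      (simp_all add: trimmed_mult_nonneg trimmed_mult_mono less_imp_le)
  also have "\<dots> \<le> universal_approx s n'"
    unfolding universal_approx_def using \<open>n \<le> n'\<close> weight_pos
    by (intro sum_mono2) (simp_all add: less_imp_le mult_gen_nonneg trimmed_mult_nonneg)
  finally show ?thesis .
qed

lemma universal_approx_le: "universal_approx s n \<le> universal_test s"
proof -
  have "universal_approx s n \<le> (\<Sum>k<n. weight k * mult_gen (limit_mult k) s)"
    unfolding universal_approx_def using weight_pos
    by (intro sum_mono mult_left_mono mult_gen_mono)
      (simp_all add: trimmed_mult_nonneg trimmed_mult_le_limit less_imp_le)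
  also have "\<dots> \<le> universal_test s"
    unfolding universal_test_def using weight_pos
    by (intro sum_le_suminf summable_universal_test)
      (simp_all add: less_imp_le mult_gen_nonneg limit_mult_nonneg)
  finally show ?thesis .
qed

lemma universal_approx_tendsto: "(\<lambda>n. universal_approx s n) \<longlonglongrightarrow> universal_test s"
proof -
  have bdd: "bdd_above (range (universal_approx s))"
    using universal_approx_le by (intro bdd_aboveI2)
  have "(\<lambda>n. universal_approx s n) \<longlonglongrightarrow> (SUP n. universal_approx s n)"
    using bdd by (rule LIMSEQ_incseq_SUP) (simp add: incseq_def universal_approx_mono)
  moreover have "(SUP n. universal_approx s n) = universal_test s"
  proof (rule antisym)
    show "(SUP n. universal_approx s n) \<le> universal_test s"
      by (rule cSUP_least) (simp_all add: universal_approx_le)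
    have "(\<Sum>k<K. weight k * mult_gen (limit_mult k) s) \<le> (SUP n. universal_approx s n)" for K
    proof (rule LIMSEQ_le_const2)
      show "(\<lambda>n. \<Sum>k<K. weight k * mult_gen (trimmed_mult k n) s) \<longlonglongrightarrow>
          (\<Sum>k<K. weight k * mult_gen (limit_mult k) s)"
        unfolding mult_gen_def by (intro tendsto_intros trimmed_mult_tendsto)
      have "(\<Sum>k<K. weight k * mult_gen (trimmed_mult k n) s) \<le> (SUP n. universal_approx s n)"
        if "K \<le> n" for n
      proof -
        have "(\<Sum>k<K. weight k * mult_gen (trimmed_mult k n) s) \<le> universal_approx s n"
          unfolding universal_approx_def using that weight_pos
          by (intro sum_mono2) (simp_all add: less_imp_le mult_gen_nonneg trimmed_mult_nonneg)
        also have "\<dots> \<le> (SUP n. universal_approx s n)" by (rule cSUP_upper[OF _ bdd]) simp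
        finally show ?thesis .
      qed
      then show "\<exists>N. \<forall>n\<ge>N. (\<Sum>k<K. weight k * mult_gen (trimmed_mult k n) s) \<le> (SUP n. universal_approx s n)"
        by blast
    qed
    then show "universal_test s \<le> (SUP n. universal_approx s n)"
      unfolding universal_test_def by (intro suminf_le_const summable_universal_test)
  qed
  ultimately show ?thesis by simp
qed

lemma trimmed_den_pos: "0 < trimmed_den k sc n"
  unfolding trimmed_den_def by (intro prod_pos) (simp add: frac_den_pos)

lemma approx_den_pos: "0 < approx_den sc n"
  unfolding approx_den_def by (intro prod_pos) (simp add: trimmed_den_pos)

lemma trimmed_num_div_den:
  "real (trimmed_num k (enc_str s) n) / real (trimmed_den k (enc_str s) n) = mult_gen (trimmed_mult k n) s"
proof -
  have "mult_gen (trimmed_mult k n) s =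
      (\<Prod>j<length s. real (frac_num (trimmed_code k (enc_str (take j s)) (enc_bit (s ! j)) n)) /
                      real (frac_den (trimmed_code k (enc_str (take j s)) (enc_bit (s ! j)) n)))"
    unfolding mult_gen_def trimmed_mult_def frac_val_def ..
  also have "\<dots> = real (trimmed_num k (enc_str s) n) / real (trimmed_den k (enc_str s) n)"
    unfolding prod_dividef trimmed_num_def trimmed_den_def by simp
  finally show ?thesis by simp
qed

lemma approx_num_div_den:
  "real (approx_num (enc_str s) n) / real (approx_den (enc_str s) n) = universal_approx s n"
proof -
  let ?sc = "enc_str s"
  let ?d = "\<lambda>k. trimmed_den k ?sc n * 2 ^ Suc k"
  have "real (approx_num ?sc n) / real (approx_den ?sc n) =
      (\<Sum>k<n. real (trimmed_num k ?sc n) * real (approx_den ?sc n div ?d k) / real (approx_den ?sc n))"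
    unfolding approx_num_def by (simp add: sum_divide_distrib)
  also have "\<dots> = (\<Sum>k<n. weight k * mult_gen (trimmed_mult k n) s)"
  proof (intro sum.cong refl)
    fix k assume "k \<in> {..<n}"
    then have "?d k dvd approx_den ?sc n" unfolding approx_den_def by (intro dvd_prodI) auto
    then have "real (approx_den ?sc n div ?d k) = real (approx_den ?sc n) / real (?d k)"
      by (simp add: real_of_nat_div)
    then have "real (trimmed_num k ?sc n) * real (approx_den ?sc n div ?d k) / real (approx_den ?sc n)
        = real (trimmed_num k ?sc n) / real (?d k)"
      using approx_den_pos[of ?sc n] trimmed_den_pos[of k ?sc n] by (simp add: field_simps)
    also have "\<dots> = weight k * mult_gen (trimmed_mult k n) s"
      by (simp flip: trimmed_num_div_den add: weight_def field_simps power_divide)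
    finally show "real (trimmed_num k ?sc n) * real (approx_den ?sc n div ?d k) / real (approx_den ?sc n)
        = weight k * mult_gen (trimmed_mult k n) s" .
  qed
  finally show ?thesis by (simp add: universal_approx_def)
qed

lemma lower_semicomputable_universal_test: "lower_semicomputable universal_test"
proof -
  define r where "r s n = (of_nat (approx_num (enc_str s) n) / of_nat (approx_den (enc_str s) n) :: rat)"
    for s n
  have r: "real_of_rat (r s n) = universal_approx s n" for s n
    unfolding r_def by (simp add: of_rat_divide approx_num_div_den)
  obtain f where f: "\<forall>xs. length xs = 2 \<longrightarrow>
      reval f xs (frac_code (approx_num (xs ! 0) (xs ! 1)) (approx_den (xs ! 0) (xs ! 1)))"
    using computable_approx_code unfolding computable_def by blast
  have "reval f [enc_str s, n] (enc_rat (r s n))" for s n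
  proof -
    have "reval f [enc_str s, n] (frac_code (approx_num (enc_str s) n) (approx_den (enc_str s) n))"
      using f[rule_format, of "[enc_str s, n]"] by simp
    then show ?thesis unfolding r_def frac_code_eq_enc_rat[OF approx_den_pos] .
  qed
  then have "recursive_SN_Q r" unfolding recursive_SN_Q_def by blast
  moreover have "mono (r s)" for s
    unfolding mono_def using universal_approx_mono r by (metis of_rat_less_eq)
  moreover have "(\<lambda>n. real_of_rat (r s n)) \<longlonglongrightarrow> universal_test s" for s
    unfolding r by (rule universal_approx_tendsto)
  ultimately show ?thesis unfolding lower_semicomputable_def by blast
qed

context
  fixes f :: recf and r :: "bool list \<Rightarrow> bool \<Rightarrow> nat \<Rightarrow> rat" and D :: "bool list \<Rightarrow> bool \<Rightarrow> real"
  assumes computes: "\<forall>s x n. reval f [enc_str s, enc_bit x, n] (enc_rat (r s x n))"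
    and mono_approx: "\<forall>s x. mono (r s x)"
    and approx_tendsto: "\<forall>s x. (\<lambda>n. real_of_rat (r s x n)) \<longlonglongrightarrow> D s x"
begin

lemma approx_mono: "m \<le> m' \<Longrightarrow> real_of_rat (r s x m) \<le> real_of_rat (r s x m')"
  using mono_approx by (simp add: mono_def of_rat_less_eq)

lemma approx_le: "0 \<le> D s x \<Longrightarrow> max (real_of_rat (r s x m)) 0 \<le> D s x"
  using incseq_le[of "\<lambda>n. real_of_rat (r s x n)"] approx_tendsto approx_mono
  by (simp add: incseq_def)

lemma frac_val_approx_out:
  assumes "approx_halted (prog_code f) (enc_str s) m n"
  shows "frac_val (approx_out (prog_code f) (enc_str s) (enc_bit x) m n) = max (real_of_rat (r s x m)) 0"
proof -
  have "halts_within (prog_code f) (list_encode [enc_str s, enc_bit x, m]) n"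
    using assms unfolding approx_halted_def approx_input_eq by (cases x) (simp_all add: enc_bit_def)
  from output_within_eq[OF this] computes
  have "approx_out (prog_code f) (enc_str s) (enc_bit x) m n = enc_rat (r s x m)"
    by (simp add: approx_out_def approx_input_eq)
  then show ?thesis by (simp add: frac_val_enc_rat)
qed

lemma ex_approx_halted: "\<exists>N. \<forall>m'\<le>m. approx_halted (prog_code f) (enc_str s) m' N"
proof (induction m)
  case 0
  obtain n1 n0 where "halts_within (prog_code f) (approx_input (enc_str s) 1 0) n1"
    "halts_within (prog_code f) (approx_input (enc_str s) 0 0) n0"
    using reval_imp_halts_within computes by (metis approx_input_eq enc_bit_def)
  then have "approx_halted (prog_code f) (enc_str s) 0 (max n1 n0)"
    unfolding approx_halted_def using halts_within_mono by (meson max.cobounded1 max.cobounded2)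
  then show ?case by auto
next
  case (Suc m)
  then obtain N where N: "\<forall>m'\<le>m. approx_halted (prog_code f) (enc_str s) m' N" by auto
  obtain n1 n0 where "halts_within (prog_code f) (approx_input (enc_str s) 1 (Suc m)) n1"
    "halts_within (prog_code f) (approx_input (enc_str s) 0 (Suc m)) n0"
    using reval_imp_halts_within computes by (metis approx_input_eq enc_bit_def)
  then have "approx_halted (prog_code f) (enc_str s) (Suc m) (max N (max n1 n0))"
    unfolding approx_halted_def using halts_within_mono by (meson le_max_iff_disj order.refl)
  moreover have "\<forall>m'\<le>m. approx_halted (prog_code f) (enc_str s) m' (max N (max n1 n0))"
    using N approx_halted_mono by auto
  ultimately show ?case by (auto simp: le_Suc_eq)
qed

lemma trimmed_mult_le: "0 \<le> D s x \<Longrightarrow> trimmed_mult (prog_code f) n s x \<le> D s x"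
proof (cases "good_count (prog_code f) (enc_str s) n = 0")
  case False
  assume "0 \<le> D s x"
  let ?M = "good_count (prog_code f) (enc_str s) n"
  have "approx_halted (prog_code f) (enc_str s) (?M - 1) n"
    using good_upto_approx_halted[OF good_upto_good_count] False by auto
  then have "trimmed_mult (prog_code f) n s x = max (real_of_rat (r s x (?M - 1))) 0"
    using False by (simp add: trimmed_mult_def trimmed_code_def frac_val_approx_out)
  then show ?thesis using approx_le \<open>0 \<le> D s x\<close> by simp
qed (simp add: trimmed_mult_def trimmed_code_def)

context
  fixes s :: "bool list"
  assumes mult_nonneg: "\<And>x. 0 \<le> D s x"
    and mult_lo: "lo * D s True + (1 - lo) * D s False \<le> 1"
    and mult_hi: "hi * D s True + (1 - hi) * D s False \<le> 1"
begin

lemma ex_good_upto: "\<exists>N>m. good_upto (prog_code f) (enc_str s) m N"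
proof -
  let ?k = "prog_code f" and ?sc = "enc_str s"
  obtain N0 where "\<forall>m'\<le>m. approx_halted ?k ?sc m' N0" using ex_approx_halted by blast
  then have halted: "approx_halted ?k ?sc m' (max N0 (Suc m))" if "m' \<le> m" for m'
    using that approx_halted_mono by (meson max.cobounded1)
  define N where "N = max N0 (Suc m)"
  have val: "frac_val (approx_out ?k ?sc 1 m' N) = max (real_of_rat (r s True m')) 0"
    "frac_val (approx_out ?k ?sc 0 m' N) = max (real_of_rat (r s False m')) 0" if "m' \<le> m" for m'
    using frac_val_approx_out[OF halted[OF that], of True] frac_val_approx_out[OF halted[OF that], of False]
    by (simp_all add: N_def enc_bit_def)
  have "admissible (approx_out ?k ?sc 1 m' N) (approx_out ?k ?sc 0 m' N)" if "m' \<le> m" for m'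
  proof -
    have convex: "p * max (real_of_rat (r s True m')) 0 + (1 - p) * max (real_of_rat (r s False m')) 0
        \<le> p * D s True + (1 - p) * D s False" if "0 \<le> p" "p \<le> 1" for p
      using that approx_le mult_nonneg by (intro add_mono mult_left_mono) auto
    have "lo * max (real_of_rat (r s True m')) 0 + (1 - lo) * max (real_of_rat (r s False m')) 0 \<le> 1"
      "hi * max (real_of_rat (r s True m')) 0 + (1 - hi) * max (real_of_rat (r s False m')) 0 \<le> 1"
      using convex[of lo] convex[of hi] lo_hi mult_lo mult_hi by auto
    then show ?thesis unfolding admissible_iff val[OF that] by blast
  qed
  moreover have "frac_le (approx_out ?k ?sc 1 (m' - 1) N) (approx_out ?k ?sc 1 m' N)"
    "frac_le (approx_out ?k ?sc 0 (m' - 1) N) (approx_out ?k ?sc 0 m' N)" if "m' \<le> m" for m'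
    unfolding frac_le_iff val[OF that] val[OF le_trans[OF diff_le_self that]]
    by (rule max.mono[OF approx_mono order.refl], simp)+
  ultimately have "good_upto ?k ?sc m N"
    unfolding good_upto_def N_def using halted by (simp add: less_Suc_eq_le)
  then show ?thesis unfolding N_def by (intro exI[of _ "max N0 (Suc m)"]) auto
qed

lemma approx_le_trimmed_mult: "\<exists>N. max (real_of_rat (r s x m)) 0 \<le> trimmed_mult (prog_code f) N s x"
proof -
  let ?k = "prog_code f" and ?sc = "enc_str s"
  obtain N where "m < N" "good_upto ?k ?sc m N" using ex_good_upto by blast
  then have M: "m < good_count ?k ?sc N" using good_upto_iff_less_good_count by blast
  then have "approx_halted ?k ?sc (good_count ?k ?sc N - 1) N"
    using good_upto_approx_halted[OF good_upto_good_count] by auto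
  then have "trimmed_mult ?k N s x = max (real_of_rat (r s x (good_count ?k ?sc N - 1))) 0"
    using M by (simp add: trimmed_mult_def trimmed_code_def frac_val_approx_out)
  moreover have "real_of_rat (r s x m) \<le> real_of_rat (r s x (good_count ?k ?sc N - 1))"
    using M by (intro approx_mono) auto
  ultimately show ?thesis by (intro exI[of _ N]) (simp add: max.coboundedI1)
qed

lemma limit_mult_eq: "limit_mult (prog_code f) s x = D s x"
proof (rule antisym)
  show "limit_mult (prog_code f) s x \<le> D s x"
    unfolding limit_mult_def by (rule cSUP_least) (simp_all add: trimmed_mult_le mult_nonneg)
  have "(\<lambda>m. max (real_of_rat (r s x m)) 0) \<longlonglongrightarrow> max (D s x) 0"
    using approx_tendsto by (intro tendsto_intros) auto
  moreover have "max (real_of_rat (r s x m)) 0 \<le> limit_mult (prog_code f) s x" for m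
    using approx_le_trimmed_mult trimmed_mult_le_limit order.trans by blast
  ultimately have "max (D s x) 0 \<le> limit_mult (prog_code f) s x"
    by (intro LIMSEQ_le_const2) auto
  then show "D s x \<le> limit_mult (prog_code f) s x" by simp
qed

end

end

lemma universal_test_dominates:
  assumes "\<not> wML_random {lo..hi} \<omega>"
  shows "limsup (\<lambda>n. ereal (universal_test (prefix \<omega> n))) = \<infinity>"
proof -
  obtain D where lsc: "lower_semicomputable_mult D" and test: "test_supermartingale {lo..hi} (mult_gen D)"
    and unbounded: "limsup (\<lambda>n. ereal (mult_gen D (prefix \<omega> n))) = \<infinity>"
    using assms unfolding wML_random_def by blast
  obtain r f where "\<forall>s x n. reval f [enc_str s, enc_bit x, n] (enc_rat (r s x n))"
    "\<forall>s x. mono (r s x)" "\<forall>s x. (\<lambda>n. real_of_rat (r s x n)) \<longlonglongrightarrow> D s x"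
    using lsc unfolding lower_semicomputable_mult_def recursive_SXN_Q_def by blast
  note limit_mult_eq = limit_mult_eq[OF this]
  have pos: "0 < mult_gen D (prefix \<omega> n)" for n
    using test unbounded by (intro mult_gen_prefix_pos) (auto simp: test_supermartingale_def)
  have "limit_mult (prog_code f) (prefix \<omega> j) x = D (prefix \<omega> j) x" for j x
    using lo_hi pos[of j]
    by (intro limit_mult_eq mult_gen_supermartingale_nonneg[OF test]
        mult_gen_supermartingale_le_one[OF test]) auto
  then have "mult_gen (limit_mult (prog_code f)) (prefix \<omega> n) = mult_gen D (prefix \<omega> n)" for n
    by (simp add: mult_gen_prefix)
  then have "weight (prog_code f) * mult_gen D (prefix \<omega> n) \<le> universal_test (prefix \<omega> n)" for n
    using weight_le_universal_test by metis
  then show ?thesis by (rule limsup_infinity_dominated[OF weight_pos _ unbounded])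
qed

end

lemma nonneg_rat_eq_nat_fraction:
  assumes "0 \<le> c"
  shows "\<exists>p q. 0 < q \<and> real_of_rat c = real p / real q"
proof -
  obtain p q where c: "quotient_of c = (p, q)" by (cases "quotient_of c")
  have "0 < q" using quotient_of_denom_pos[OF c] .
  moreover have "0 \<le> (of_int p / of_int q :: rat)" using assms quotient_of_div[OF c] by simp
  with \<open>0 < q\<close> have "0 \<le> p" by (simp add: zero_le_divide_iff)
  ultimately show ?thesis using quotient_of_div[OF c]
    by (intro exI[of _ "nat p"] exI[of _ "nat q"]) (simp add: of_rat_divide)
qed

theorem lemma6:
  fixes a b :: rat
  assumes "0 < a" and "a \<le> b" and "b < 1"
  shows "\<exists>T. lower_semicomputable T \<and>
             test_supermartingale {real_of_rat a .. real_of_rat b} T \<and>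
             (\<forall>\<omega>. \<not> wML_random {real_of_rat a .. real_of_rat b} \<omega> \<longrightarrow>
                  limsup (\<lambda>n. ereal (T (prefix \<omega> n))) = \<infinity>)"
proof -
  obtain pa qa pb qb where "0 < qa" "real_of_rat a = real pa / real qa"
    "0 < qb" "real_of_rat b = real pb / real qb"
    using nonneg_rat_eq_nat_fraction assms by (meson less_imp_le order.trans)
  moreover have "0 < real_of_rat a" "real_of_rat a \<le> real_of_rat b" "real_of_rat b < 1"
    using assms by (simp_all add: of_rat_less_eq)
  ultimately interpret rational_interval pa qa pb qb
    by unfold_locales simp_all
  have "{real_of_rat a .. real_of_rat b} = {lo..hi}"
    by (simp add: lo_def hi_def \<open>real_of_rat a = _\<close> \<open>real_of_rat b = _\<close>)
  then show ?thesis
    using lower_semicomputable_universal_test test_supermartingale_universal_test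
      universal_test_dominates by auto
qed

end
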